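(* Consider the closed-loop system $$\dot X(t)=f\big(X(t),u(0,t)\big),\quad u_t(x,t)=v\big(u(x,t)\big)u_x(x,t),\quad u(1,t)=\kappa\big(p(1,t)\big),$$ with $p(x,t)=X(t)+\int_0^x f(p(y,t),u(y,t))\Gamma(u(y,t),u_y(y,t),y)\,dy$, $\Gamma(u,u_x,x)=\frac{1}{v(u)}-\frac{x v'(u)u_x}{v(u)^2}$, under Assumptions (A1)–(A3) below, let $M>0$ be fixed, and define $w(x,t)=u(x,t)-\kappa(p(x,t))$, $$\Omega(t)=|X(t)|+\|u(t)\|_\infty+\|u_x(t)\|_\infty,\qquad \Omega_w(t)=|X(t)|+\|w(t)\|_\infty+\|w_x(t)\|_\infty.$$ There exist class $\mathcal{K}_\infty$ functions $\rho_3,\rho_4$ such that for all solutions of the closed-loop system satisfying $$-M<\frac{v'\big(u(x,t)\big)u_x(x,t)}{v\big(u(x,t)\big)}<1\quad\text{for all }x\in[0,1],\ t\ge0,$$ the following hold for all $t\ge0$: $\Omega_w(t)\le\rho_3(\Omega(t))$ and $\Omega(t)\le\rho_4(\Omega_w(t))$.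
   Context: $X(t)\in\mathbb{R}^n$, $u(x,t)\in\mathbb{R}$, $x\in[0,1]$, $t\ge0$; $f:\mathbb{R}^n\times\mathbb{R}\to\mathbb{R}^n$ is continuously differentiable with $f(0,0)=0$. (A1) $v:\mathbb{R}\to\mathbb{R}_+$ is twice continuously differentiable and $v(u)\ge\underline v>0$ for all $u$. (A2) $\dot X=f(X,\omega)$ is strongly forward complete w.r.t. $\omega$: there exist smooth $R:\mathbb{R}^n\to\mathbb{R}_+$ and class $\mathcal{K}_\infty$ functions $\alpha_1,\alpha_2,\alpha_3$ with $\alpha_1(|X|)\le R(X)\le\alpha_2(|X|)$, $\frac{\partial R}{\partial X}f(X,\omega)\le R(X)+\alpha_3(|\omega|)$. (A3) $\kappa:\mathbb{R}^n\to\mathbb{R}$ is twice continuously differentiable, $\kappa(0)=0$, and $\dot X=f(X,\kappa(X)+\omega)$ is input-to-state stable w.r.t. $\omega$. Solutions are continuously differentiable functions $X$, $u$ satisfying the closed-loop equations. For scalar $g(\cdot,t)$, $\|g(t)\|_\infty=\max_{x\in[0,1]}|g(x,t)|$; $|\cdot|$ is the Euclidean norm. *)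

theory Defs
  imports "HOL-Analysis.Analysis"
begin

definition class_K :: "(real \<Rightarrow> real) \<Rightarrow> bool" where
  "class_K \<gamma> \<longleftrightarrow> continuous_on {0..} \<gamma> \<and> \<gamma> 0 = 0 \<and> strict_mono_on {0..} \<gamma>"

definition class_K_inf :: "(real \<Rightarrow> real) \<Rightarrow> bool" where
  "class_K_inf \<gamma> \<longleftrightarrow> class_K \<gamma> \<and> filterlim \<gamma> at_top at_top"

definition class_KL :: "(real \<Rightarrow> real \<Rightarrow> real) \<Rightarrow> bool" where
  "class_KL \<beta> \<longleftrightarrow>
     continuous_on ({0..} \<times> {0..}) (\<lambda>(r, s). \<beta> r s) \<and>
     (\<forall>s\<ge>0. class_K (\<lambda>r. \<beta> r s)) \<and>
     (\<forall>r\<ge>0. antimono_on {0..} (\<beta> r) \<and> ((\<beta> r) \<longlongrightarrow> 0) at_top)"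

definition C1_on :: "'a::real_normed_vector set \<Rightarrow> ('a \<Rightarrow> 'b::real_normed_vector) \<Rightarrow> bool" where
  "C1_on S g \<longleftrightarrow> (\<exists>g'. (\<forall>z\<in>S. (g has_derivative blinfun_apply (g' z)) (at z)) \<and> continuous_on S g')"

definition C2_on :: "'a::real_normed_vector set \<Rightarrow> ('a \<Rightarrow> 'b::real_normed_vector) \<Rightarrow> bool" where
  "C2_on S g \<longleftrightarrow> (\<exists>g'. (\<forall>z\<in>S. (g has_derivative blinfun_apply (g' z)) (at z)) \<and> C1_on S g')"

definition sup_on :: "real set \<Rightarrow> (real \<Rightarrow> real) \<Rightarrow> real" where
  "sup_on A g = (SUP s\<in>A. \<bar>g s\<bar>)"

definition ISS :: "('a::euclidean_space \<Rightarrow> real \<Rightarrow> 'a) \<Rightarrow> bool" where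
  "ISS g \<longleftrightarrow> (\<exists>\<beta> \<gamma>. class_KL \<beta> \<and> class_K \<gamma> \<and>
     (\<forall>X \<omega>. continuous_on {0..} \<omega> \<longrightarrow>
        (\<forall>t\<ge>0. (X has_vector_derivative g (X t) (\<omega> t)) (at t within {0..})) \<longrightarrow>
        (\<forall>t\<ge>0. norm (X t) \<le> \<beta> (norm (X 0)) t + \<gamma> (sup_on {0..t} \<omega>))))"

definition strongly_forward_complete :: "('a::euclidean_space \<Rightarrow> real \<Rightarrow> 'a) \<Rightarrow> bool" where
  "strongly_forward_complete g \<longleftrightarrow>
     (\<exists>R R' \<alpha>1 \<alpha>2 \<alpha>3. class_K_inf \<alpha>1 \<and> class_K_inf \<alpha>2 \<and> class_K_inf \<alpha>3 \<and>
        C1_on UNIV R \<and> (\<forall>X. (R has_derivative R' X) (at X)) \<and>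
        (\<forall>X. 0 \<le> R X \<and> \<alpha>1 (norm X) \<le> R X \<and> R X \<le> \<alpha>2 (norm X)) \<and>
        (\<forall>X \<omega>. R' X (g X \<omega>) \<le> R X + \<alpha>3 \<bar>\<omega>\<bar>))"

definition Gamma :: "(real \<Rightarrow> real) \<Rightarrow> real \<Rightarrow> real \<Rightarrow> real \<Rightarrow> real" where
  "Gamma v u ux x = 1 / v u - x * deriv v u * ux / (v u)\<^sup>2"

definition Dom :: "(real \<times> real) set" where
  "Dom = {0..1} \<times> {0..}"

definition closed_loop_solution ::
  "('a::euclidean_space \<Rightarrow> real \<Rightarrow> 'a) \<Rightarrow> (real \<Rightarrow> real) \<Rightarrow> ('a \<Rightarrow> real) \<Rightarrow>
   (real \<Rightarrow> 'a) \<Rightarrow> (real \<Rightarrow> real \<Rightarrow> real) \<Rightarrow> (real \<Rightarrow> real \<Rightarrow> real) \<Rightarrow>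
   (real \<Rightarrow> real \<Rightarrow> real) \<Rightarrow> (real \<Rightarrow> real \<Rightarrow> 'a) \<Rightarrow> bool" where
  "closed_loop_solution f v \<kappa> X u ux ut p \<longleftrightarrow>
     (\<forall>t\<ge>0. (X has_vector_derivative f (X t) (u 0 t)) (at t within {0..})) \<and>
     continuous_on {0..} (\<lambda>t. f (X t) (u 0 t)) \<and>
     continuous_on Dom (\<lambda>(x, t). u x t) \<and>
     continuous_on Dom (\<lambda>(x, t). ux x t) \<and>
     continuous_on Dom (\<lambda>(x, t). ut x t) \<and>
     (\<forall>x\<in>{0..1}. \<forall>t\<ge>0. ((\<lambda>y. u y t) has_real_derivative ux x t) (at x within {0..1})) \<and>
     (\<forall>x\<in>{0..1}. \<forall>t\<ge>0. ((\<lambda>s. u x s) has_real_derivative ut x t) (at t within {0..})) \<and>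
     (\<forall>x\<in>{0..1}. \<forall>t\<ge>0. ut x t = v (u x t) * ux x t) \<and>
     (\<forall>t\<ge>0. u 1 t = \<kappa> (p 1 t)) \<and>
     (\<forall>x\<in>{0..1}. \<forall>t\<ge>0. p x t = X t +
        integral {0..x} (\<lambda>y. Gamma v (u y t) (ux y t) y *\<^sub>R f (p y t) (u y t)))"

definition supnorm01 :: "(real \<Rightarrow> real) \<Rightarrow> real" where
  "supnorm01 g = (SUP x\<in>{0..1}. \<bar>g x\<bar>)"

end

(* For fixed t, the nonlocal variable p(., t) solves the spatial equation p_x = Gamma f(p, u) with
   p(0) = X, and the slope constraint -M < v'(u) u_x / v(u) < 1 makes the weight Gamma positive and
   at most (1 + M) / v_min.

   Omega_w <= rho3(Omega): along p the Lyapunov function R of (A2) grows at most exponentially,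
   so |p| is bounded in terms of |X| and ||u||; hence so are w = u - kappa(p) and
   w_x = u_x - kappa'(p) Gamma f(p, u), and they are small when Omega is small.

   Omega <= rho4(Omega_w): in the variable sigma = int Gamma, the curve p is a trajectory of
   X' = f(X, kappa(X) + w) driven by the input w; continued beyond x = 1 with a frozen input,
   it obeys the ISS estimate (A3), which bounds |p| by |X| and ||w||; then u = w + kappa(p) and
   u_x = w_x + kappa'(p) Gamma f(p, u).

   In both directions the estimates are uniform on bounded sets and small near zero; such
   bounds are turned into class K-infinity gains by averaging their monotone envelope. *)

theory Submission
  imports Defs
begin

section \<open>Comparison functions\<close>

lemma class_K_mono: "class_K \<alpha> \<Longrightarrow> 0 \<le> x \<Longrightarrow> x \<le> y \<Longrightarrow> \<alpha> x \<le> \<alpha> y"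
  unfolding class_K_def by (metis atLeast_iff order.trans order_le_less strict_mono_onD)

lemma class_K_nonneg: "class_K \<alpha> \<Longrightarrow> 0 \<le> x \<Longrightarrow> 0 \<le> \<alpha> x"
  using class_K_mono[of \<alpha> 0 x] unfolding class_K_def by simp

lemma class_K_inf_imp_class_K: "class_K_inf \<alpha> \<Longrightarrow> class_K \<alpha>"
  by (simp add: class_K_inf_def)

lemma class_K_small_near_zero:
  assumes "class_K \<alpha>" "e > 0"
  shows "\<exists>d>0. \<forall>x. 0 \<le> x \<longrightarrow> x \<le> d \<longrightarrow> \<alpha> x \<le> e"
proof -
  have "continuous (at 0 within {0..}) \<alpha>"
    using assms(1) unfolding class_K_def continuous_on_eq_continuous_within by auto
  then obtain d where d: "d > 0" "\<And>x. x \<in> {0..} \<Longrightarrow> dist x 0 < d \<Longrightarrow> dist (\<alpha> x) (\<alpha> 0) < e"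
    unfolding continuous_within_eps_delta using assms(2) by blast
  have a0: "\<alpha> 0 = 0" using assms(1) by (simp add: class_K_def)
  show ?thesis
  proof (intro exI[of _ "d/2"] conjI allI impI)
    fix x :: real assume "0 \<le> x" "x \<le> d/2"
    then show "\<alpha> x \<le> e" using d(2)[of x] d(1) a0 by (auto simp: dist_real_def)
  qed (use d in simp)
qed

lemma class_K_small_value_imp_small:
  assumes "class_K \<alpha>" "e > 0"
  shows "\<exists>c>0. \<forall>r\<ge>0. \<alpha> r \<le> c \<longrightarrow> r < e"
proof -
  have pos: "\<alpha> e > 0"
    using assms strict_mono_onD[of "{0..}" \<alpha> 0 e] by (auto simp: class_K_def)
  show ?thesis
  proof (intro exI[of _ "\<alpha> e / 2"] conjI allI impI)
    fix r :: real assume r: "0 \<le> r" "\<alpha> r \<le> \<alpha> e / 2"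
    show "r < e"
    proof (rule ccontr)
      assume "\<not> r < e"
      then have "\<alpha> e \<le> \<alpha> r" using class_K_mono[OF assms(1), of e r] assms(2) by auto
      then show False using r pos by simp
    qed
  qed (use pos in simp)
qed

lemma class_K_inf_sublevel_bounded:
  assumes "class_K_inf \<alpha>"
  shows "\<exists>\<rho>. \<forall>r\<ge>0. \<alpha> r \<le> C \<longrightarrow> r < \<rho>"
proof -
  have "\<forall>\<^sub>F x in at_top. C + 1 \<le> \<alpha> x"
    using assms by (simp add: class_K_inf_def filterlim_at_top)
  then obtain N where N: "\<And>x. x \<ge> N \<Longrightarrow> C + 1 \<le> \<alpha> x"
    by (auto simp: eventually_at_top_linorder)
  show ?thesis
  proof (intro exI[of _ N] allI impI)
    fix r :: real assume "0 \<le> r" "\<alpha> r \<le> C"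
    then show "r < N" using N[of r] by (cases "r \<ge> N") auto
  qed
qed

lemma continuous_on_average_of_mono:
  fixes m :: "real \<Rightarrow> real"
  assumes mono: "mono_on {0..} m"
  shows "continuous_on {0<..} (\<lambda>r. integral {1..2} (\<lambda>\<sigma>. m (r * \<sigma>)))"
proof -
  have intm: "m integrable_on {a..b}" if "0 \<le> a" for a b
    by (rule integrable_on_mono_on) (use that mono in \<open>auto simp: mono_on_def\<close>)
  define F where "F s = integral {0..s} m" for s
  have Fc: "continuous_on {0..b} F" for b
    unfolding F_def by (rule indefinite_integral_continuous_1[OF intm]) simp
  have avg: "integral {1..2} (\<lambda>\<sigma>. m (r * \<sigma>)) = (F (2 * r) - F r) / r" if "0 < r" for r
  proof -
    have im: "(\<lambda>x. x / r) ` {r..2 * r} = {1..2}"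
    proof
      show "(\<lambda>x. x / r) ` {r..2 * r} \<subseteq> {1..2}" using that by (auto simp: field_simps)
      show "{1..2} \<subseteq> (\<lambda>x. x / r) ` {r..2 * r}"
      proof
        fix x :: real assume "x \<in> {1..2}"
        then show "x \<in> (\<lambda>x. x / r) ` {r..2 * r}"
          using that by (intro image_eqI[of _ _ "x * r"]) (auto intro: mult_right_mono)
      qed
    qed
    have "integral {1..2} (\<lambda>\<sigma>. m (r * \<sigma>)) = (1 / \<bar>r\<bar>) *\<^sub>R integral {r..2 * r} m"
      using integral_stretch_real[where m=r and f=m and a=r and b="2 * r"] that im by simp
    moreover have "integral {0..r} m + integral {r..2 * r} m = integral {0..2 * r} m"
      by (rule Henstock_Kurzweil_Integration.integral_combine) (use that intm in auto)
    ultimately show ?thesis using that by (simp add: F_def divide_inverse mult.commute)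
  qed
  have "continuous_on {c..C} (\<lambda>r. (F (2 * r) - F r) / r)" if "0 < c" for c C
  proof (intro continuous_intros)
    show "continuous_on {c..C} (\<lambda>x. F (2 * x))"
      by (rule continuous_on_compose2[OF Fc[of "2 * C"]]) (use that in \<open>auto intro!: continuous_intros\<close>)
    show "continuous_on {c..C} F"
      by (rule continuous_on_subset[OF Fc[of C]]) (use that in auto)
  qed (use that in auto)
  then have "continuous_on {c..C} (\<lambda>r. integral {1..2} (\<lambda>\<sigma>. m (r * \<sigma>)))" if "0 < c" for c C
    by (rule continuous_on_eq) (use that avg in auto)
  then have "continuous (at r) (\<lambda>r. integral {1..2} (\<lambda>\<sigma>. m (r * \<sigma>)))" if "0 < r" for r
    using that by (intro continuous_on_interior[of "{r/2..2*r}"]) auto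
  then show ?thesis by (simp add: continuous_at_imp_continuous_on)
qed

text \<open>The majorant is \<open>\<rho> r = r + \<integral>\<^sub>1\<^sup>2 m (r \<sigma>) d\<sigma>\<close>: averaging makes it continuous, the summand
  \<open>r\<close> strictly increasing and unbounded.\<close>
lemma class_K_inf_majorant:
  fixes m :: "real \<Rightarrow> real"
  assumes mono: "\<And>x y. 0 \<le> x \<Longrightarrow> x \<le> y \<Longrightarrow> m x \<le> m y"
    and m0: "m 0 = 0"
    and lim: "\<And>e. e > 0 \<Longrightarrow> \<exists>d>0. m d \<le> e"
  shows "\<exists>\<rho>. class_K_inf \<rho> \<and> (\<forall>r\<ge>0. m r \<le> \<rho> r)"
proof -
  have mnn: "0 \<le> x \<Longrightarrow> 0 \<le> m x" for x using mono[of 0 x] m0 by simp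
  define \<rho> where "\<rho> r = r + integral {1..2} (\<lambda>\<sigma>. m (r * \<sigma>))" for r
  have ints: "(\<lambda>\<sigma>. m (r * \<sigma>)) integrable_on {1..2}" if "0 \<le> r" for r
    by (rule integrable_on_mono_on) (use that in \<open>auto simp: mono_on_def intro!: mono mult_left_mono\<close>)
  have lo: "m r \<le> integral {1..2} (\<lambda>\<sigma>. m (r * \<sigma>))" if "0 \<le> r" for r
  proof -
    have "integral {1..2::real} (\<lambda>\<sigma>. m r) \<le> integral {1..2} (\<lambda>\<sigma>. m (r * \<sigma>))"
      by (rule integral_le) (use that ints in \<open>auto intro!: mono simp: mult_le_cancel_left1\<close>)
    then show ?thesis by simp
  qed
  have hi: "integral {1..2} (\<lambda>\<sigma>. m (r * \<sigma>)) \<le> m (2 * r)" if "0 \<le> r" for r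
  proof -
    have "integral {1..2} (\<lambda>\<sigma>. m (r * \<sigma>)) \<le> integral {1..2::real} (\<lambda>\<sigma>. m (2 * r))"
      by (rule integral_le) (use that ints in \<open>auto intro!: mono simp: mult.commute[of 2] intro: mult_left_mono\<close>)
    then show ?thesis by simp
  qed
  have smono: "strict_mono_on {0..} \<rho>"
  proof (rule strict_mono_onI)
    fix x y :: real assume "x \<in> {0..}" "y \<in> {0..}" "x < y"
    then have "integral {1..2} (\<lambda>\<sigma>. m (x * \<sigma>)) \<le> integral {1..2} (\<lambda>\<sigma>. m (y * \<sigma>))"
      by (intro integral_le ints) (auto intro!: mono mult_right_mono)
    then show "\<rho> x < \<rho> y" using \<open>x < y\<close> by (simp add: \<rho>_def)
  qed
  have top: "filterlim \<rho> at_top at_top"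
  proof (rule filterlim_at_top_mono[OF filterlim_ident])
    show "\<forall>\<^sub>F x in at_top. x \<le> \<rho> x"
      using eventually_ge_at_top[of 0]
      by eventually_elim (use lo mnn in \<open>fastforce simp: \<rho>_def\<close>)
  qed
  have cont_pos: "continuous_on {0<..} \<rho>"
    unfolding \<rho>_def
    by (intro continuous_intros continuous_on_average_of_mono) (auto simp: mono_on_def mono)
  have cont0: "continuous (at 0 within {0..}) \<rho>"
    unfolding continuous_within_eps_delta
  proof (intro allI impI)
    fix e :: real assume e: "e > 0"
    obtain d where d: "d > 0" "m d \<le> e / 2" using lim[of "e/2"] e by auto
    have "dist (\<rho> r) (\<rho> 0) < e" if r: "0 \<le> r" "r < d/2" "r < e/2" for r
    proof -
      have "m (2 * r) \<le> m d" using r by (intro mono) auto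
      then show ?thesis
        using hi[of r] lo[of r] mnn[of r] r d by (simp add: \<rho>_def m0 dist_real_def)
    qed
    then show "\<exists>d>0. \<forall>x'\<in>{0..}. dist x' 0 < d \<longrightarrow> dist (\<rho> x') (\<rho> 0) < e"
      using d e by (intro exI[of _ "min (d/2) (e/2)"]) auto
  qed
  have "continuous_on {0..} \<rho>"
    unfolding continuous_on_eq_continuous_within
  proof
    fix x :: real assume "x \<in> {0..}"
    show "continuous (at x within {0..}) \<rho>"
    proof (cases "x = 0")
      case False
      with \<open>x \<in> {0..}\<close> have "isCont \<rho> x"
        using cont_pos by (simp add: continuous_on_eq_continuous_at)
      then show ?thesis by (rule continuous_at_imp_continuous_at_within)
    qed (use cont0 in simp)
  qed
  moreover have "\<rho> 0 = 0" by (simp add: \<rho>_def m0)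
  ultimately have "class_K_inf \<rho>"
    unfolding class_K_inf_def class_K_def using smono top by blast
  moreover have "\<forall>r\<ge>0. m r \<le> \<rho> r" using lo by (auto simp: \<rho>_def intro: add_increasing)
  ultimately show ?thesis by blast
qed

text \<open>The gauge is \<open>m r = sup {b. P a b, a \<le> r}\<close>; the hypotheses make it finite and
  nondecreasing, with \<open>m 0 = 0\<close> and right continuity at \<open>0\<close>.\<close>
lemma class_K_inf_bound_of_relation:
  fixes P :: "real \<Rightarrow> real \<Rightarrow> bool"
  assumes nonneg: "\<And>a b. P a b \<Longrightarrow> 0 \<le> a"
    and bounded: "\<And>r. \<exists>C. \<forall>a b. P a b \<longrightarrow> a \<le> r \<longrightarrow> b \<le> C"
    and small: "\<And>e. e > 0 \<Longrightarrow> \<exists>d>0. \<forall>a b. P a b \<longrightarrow> a \<le> d \<longrightarrow> b \<le> e"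
  shows "\<exists>\<rho>. class_K_inf \<rho> \<and> (\<forall>a b. P a b \<longrightarrow> b \<le> \<rho> a)"
proof -
  define S where "S r = insert 0 {b. \<exists>a. P a b \<and> a \<le> r}" for r
  define m where "m r = Sup (S r)" for r
  have Sne: "S r \<noteq> {}" for r by (simp add: S_def)
  have Sbdd: "bdd_above (S r)" for r
  proof -
    obtain C where "\<forall>a b. P a b \<longrightarrow> a \<le> r \<longrightarrow> b \<le> C" using bounded by blast
    then show ?thesis by (intro bdd_aboveI[of _ "max C 0"]) (force simp: S_def)
  qed
  have mono: "m x \<le> m y" if "0 \<le> x" "x \<le> y" for x y
    unfolding m_def by (rule cSup_subset_mono[OF Sne Sbdd]) (use that in \<open>auto simp: S_def\<close>)
  have m_le: "m r \<le> e" if "0 \<le> e" "\<And>a b. P a b \<Longrightarrow> a \<le> r \<Longrightarrow> b \<le> e" for r e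
    unfolding m_def by (rule cSup_least[OF Sne]) (use that in \<open>auto simp: S_def\<close>)
  have m_ge: "b \<le> m a" if "P a b" for a b
    unfolding m_def by (rule cSup_upper[OF _ Sbdd]) (use that in \<open>auto simp: S_def\<close>)
  have lim: "\<exists>d>0. m d \<le> e" if e: "e > 0" for e
  proof -
    obtain d where "d > 0" "\<forall>a b. P a b \<longrightarrow> a \<le> d \<longrightarrow> b \<le> e" using small[OF e] by blast
    then show ?thesis using e by (intro exI[of _ d]) (auto intro!: m_le)
  qed
  have "m 0 \<le> e" if e: "e > 0" for e
  proof (rule m_le)
    obtain d where "d > 0" "\<forall>a b. P a b \<longrightarrow> a \<le> d \<longrightarrow> b \<le> e" using small[OF e] by blast
    then show "b \<le> e" if "P a b" "a \<le> 0" for a b using that by auto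
  qed (use e in simp)
  then have "m 0 \<le> 0" using field_le_epsilon[of "m 0" 0] by simp
  moreover have "0 \<le> m 0" unfolding m_def by (rule cSup_upper[OF _ Sbdd]) (simp add: S_def)
  ultimately have "m 0 = 0" by simp
  then obtain \<rho> where "class_K_inf \<rho>" "\<forall>r\<ge>0. m r \<le> \<rho> r"
    using class_K_inf_majorant[of m, OF mono _ lim] by blast
  then show ?thesis using m_ge nonneg by force
qed

section \<open>Forward existence for ordinary differential equations\<close>

lemma has_vector_derivative_within_Un:
  assumes "(f has_vector_derivative f') (at x within S)"
    and "(f has_vector_derivative f') (at x within T)"
  shows "(f has_vector_derivative f') (at x within (S \<union> T))"
  using assms unfolding has_vector_derivative_def has_derivative_within Lim_within_Un by blast

lemma has_vector_derivative_translate: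
  fixes Y :: "real \<Rightarrow> 'a::real_normed_vector"
  assumes "(Y has_vector_derivative D) (at (t - c) within S)"
  shows "((\<lambda>s. Y (s - c)) has_vector_derivative D) (at t within plus c ` S)"
proof -
  have "((\<lambda>s. s - c) has_vector_derivative 1) (at t within plus c ` S)"
    by (auto intro!: derivative_eq_intros simp: has_real_derivative_iff_has_vector_derivative[symmetric])
  moreover have "(\<lambda>s. s - c) ` plus c ` S = S" by (simp add: image_image)
  ultimately show ?thesis
    using vector_diff_chain_within[of "\<lambda>s. s - c" 1 t "plus c ` S" Y D] assms by (simp add: o_def)
qed

lemma has_real_derivative_compose_has_derivative:
  fixes R :: "'a::real_normed_vector \<Rightarrow> real"
  assumes "(Y has_vector_derivative Y') (at s within S)" "(R has_derivative R') (at (Y s))"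
  shows "((\<lambda>s. R (Y s)) has_real_derivative R' Y') (at s within S)"
proof -
  have lin: "linear R'" using assms(2) has_derivative_bounded_linear bounded_linear.linear by blast
  have "((R \<circ> Y) has_derivative (R' \<circ> (\<lambda>h. h *\<^sub>R Y'))) (at s within S)"
    using diff_chain_within assms(1)[unfolded has_vector_derivative_def]
      has_derivative_at_withinI[OF assms(2)] by blast
  moreover have "R' \<circ> (\<lambda>h. h *\<^sub>R Y') = (\<lambda>h. R' Y' * h)"
    using linear_scale[OF lin] by (auto simp: fun_eq_iff)
  ultimately show ?thesis by (simp add: has_field_derivative_def o_def)
qed

lemma Lyapunov_exp_growth:
  fixes Y :: "real \<Rightarrow> 'a::real_normed_vector" and R :: "'a \<Rightarrow> real"
  assumes T: "0 \<le> T"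
    and dY: "\<And>s. s \<in> {0..T} \<Longrightarrow> (Y has_vector_derivative Y' s) (at s within {0..T})"
    and dR: "\<And>x. (R has_derivative R' x) (at x)"
    and ineq: "\<And>s. s \<in> {0..T} \<Longrightarrow> R' (Y s) (Y' s) \<le> G * (R (Y s) + A)"
  shows "R (Y T) + A \<le> exp (G * T) * (R (Y 0) + A)"
proof -
  define h where "h s = exp (-G * s) * (R (Y s) + A)" for s
  define h' where "h' s = exp (-G * s) * R' (Y s) (Y' s) - G * exp (-G * s) * (R (Y s) + A)" for s
  have dh: "(h has_real_derivative h' s) (at s within {0..T})" if "s \<in> {0..T}" for s
    unfolding h_def h'_def
    by (rule derivative_eq_intros has_real_derivative_compose_has_derivative[OF dY[OF that] dR]
        | simp add: algebra_simps)+
  have "h T \<le> h 0"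
  proof (rule DERIV_nonpos_imp_decreasing_open[OF T])
    fix x assume x: "0 < x" "x < T"
    have "exp (-G * x) * R' (Y x) (Y' x) \<le> exp (-G * x) * (G * (R (Y x) + A))"
      using ineq[of x] x by (intro mult_left_mono) auto
    then have "h' x \<le> 0" unfolding h'_def by (simp add: algebra_simps)
    moreover have "(h has_real_derivative h' x) (at x)"
      using dh[of x] x by (simp add: at_within_Icc_at)
    ultimately show "\<exists>y. (h has_real_derivative y) (at x) \<and> y \<le> 0" by blast
  next
    show "continuous_on {0..T} h"
      using dh by (meson DERIV_continuous continuous_on_eq_continuous_within)
  qed
  then have "exp (- (G * T)) * (R (Y T) + A) \<le> R (Y 0) + A" by (simp add: h_def)
  then have "exp (G * T) * (exp (- (G * T)) * (R (Y T) + A)) \<le> exp (G * T) * (R (Y 0) + A)"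
    by (intro mult_left_mono) auto
  then show ?thesis by (simp add: mult.assoc[symmetric] flip: exp_add)
qed

lemma integral_exp_weighted_bound:
  fixes h :: "real \<Rightarrow> 'a::euclidean_space"
  assumes "0 \<le> \<tau>" "0 < k" "h integrable_on {0..\<tau>}"
    and "\<And>s. s \<in> {0..\<tau>} \<Longrightarrow> norm (h s) \<le> B * exp (k * s)"
  shows "norm (integral {0..\<tau>} h) \<le> B * (exp (k * \<tau>) - 1) / k"
proof -
  have exi: "((\<lambda>s. B * exp (k * s)) has_integral (B * exp (k * \<tau>) / k - B * exp (k * 0) / k)) {0..\<tau>}"
  proof (rule fundamental_theorem_of_calculus[OF assms(1)])
    fix x assume "x \<in> {0..\<tau>}"
    show "((\<lambda>s. B * exp (k * s) / k) has_vector_derivative B * exp (k * x)) (at x within {0..\<tau>})"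
      unfolding has_real_derivative_iff_has_vector_derivative[symmetric]
      using assms(2) by (auto intro!: derivative_eq_intros)
  qed
  have "norm (integral {0..\<tau>} h) \<le> integral {0..\<tau>} (\<lambda>s. B * exp (k * s))"
    by (rule Henstock_Kurzweil_Integration.integral_norm_bound_integral) (use exi assms in auto)
  also have "\<dots> = B * (exp (k * \<tau>) - 1) / k"
    using integral_unique[OF exi] by (simp add: diff_divide_distrib right_diff_distrib)
  finally show ?thesis .
qed

lemma bcontfun_of_clamp01:
  fixes F :: "real \<Rightarrow> 'a::real_normed_vector"
  assumes "continuous_on {0..1} F"
  shows "(\<lambda>t. F (max 0 (min 1 t))) \<in> bcontfun"
proof -
  have "continuous_on UNIV (\<lambda>t. F (max 0 (min 1 t)))"
    by (rule continuous_on_compose2[OF assms]) (auto intro!: continuous_intros)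
  moreover have "bounded (F ` {0..1})" by (intro compact_imp_bounded compact_continuous_image assms) auto
  then have "bounded (range (\<lambda>t. F (max 0 (min 1 t))))" by (rule bounded_subset) auto
  ultimately show ?thesis by (simp add: bcontfun_def)
qed

text \<open>Picard iteration in Bielecki's weighted norm: writing \<open>Y t = exp (2 L t) Z t\<close>, the
  integral operator acting on \<open>Z\<close> is a contraction with constant \<open>1/2\<close> in the sup norm.\<close>
lemma lipschitz_integral_equation_solution:
  fixes g :: "'a::euclidean_space \<Rightarrow> 'a"
  assumes L: "L > 0" and lip: "\<And>x y. norm (g x - g y) \<le> L * norm (x - y)"
  shows "\<exists>Y :: real \<Rightarrow> 'a. continuous_on {0..1} Y \<and> (\<forall>t\<in>{0..1}. Y t = y0 + integral {0..t} (\<lambda>s. g (Y s)))"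
proof -
  define k where "k = 2 * L"
  have k: "k > 0" using L by (simp add: k_def)
  define cl :: "real \<Rightarrow> real" where "cl t = max 0 (min 1 t)" for t
  have cl_cont: "continuous_on UNIV cl" unfolding cl_def by (intro continuous_intros)
  have cl_range: "cl t \<in> {0..1}" for t by (simp add: cl_def)
  have cl_id: "t \<in> {0..1} \<Longrightarrow> cl t = t" for t by (simp add: cl_def)
  have "L-lipschitz_on UNIV g" using L lip by (auto simp: lipschitz_on_def dist_norm)
  then have gcont: "continuous_on UNIV g" by (rule lipschitz_on_continuous_on)
  define hZ :: "(real \<Rightarrow>\<^sub>C 'a) \<Rightarrow> real \<Rightarrow> 'a" where "hZ Z s = g (exp (k * s) *\<^sub>R Z s)" for Z s
  have hZ_int: "hZ Z integrable_on {a..b}" for Z a b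
    unfolding hZ_def
    by (intro integrable_continuous_real continuous_on_compose2[OF gcont]) (auto intro!: continuous_intros)
  define F0 where "F0 Z \<tau> = exp (- (k * \<tau>)) *\<^sub>R (y0 + integral {0..\<tau>} (hZ Z))" for Z \<tau>
  define FZ where "FZ Z t = F0 Z (cl t)" for Z t
  have F0_cont: "continuous_on {0..1} (F0 Z)" for Z
    unfolding F0_def by (intro continuous_intros indefinite_integral_continuous_1 hZ_int)
  have FZ_bc: "FZ Z \<in> bcontfun" for Z
    using bcontfun_of_clamp01[OF F0_cont[of Z]] by (simp add: FZ_def[abs_def] cl_def)
  define \<Phi> where "\<Phi> Z = Bcontfun (FZ Z)" for Z
  have \<Phi>_apply: "apply_bcontfun (\<Phi> Z) = FZ Z" for Z
    unfolding \<Phi>_def using FZ_bc by (simp add: Bcontfun_inverse)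
  have contr: "dist (\<Phi> Z1) (\<Phi> Z2) \<le> 1/2 * dist Z1 Z2" for Z1 Z2
  proof (rule dist_bound)
    fix t
    define D where "D = dist Z1 Z2"
    define \<tau> where "\<tau> = cl t"
    have \<tau>: "0 \<le> \<tau>" "\<tau> \<le> 1" using cl_range[of t] by (auto simp: \<tau>_def)
    have "norm (hZ Z1 s - hZ Z2 s) \<le> L * D * exp (k * s)" for s
    proof -
      have "norm (hZ Z1 s - hZ Z2 s) \<le> L * norm (exp (k * s) *\<^sub>R Z1 s - exp (k * s) *\<^sub>R Z2 s)"
        unfolding hZ_def by (rule lip)
      also have "\<dots> = L * exp (k * s) * dist (Z1 s) (Z2 s)"
        by (simp add: dist_norm scaleR_diff_right[symmetric])
      also have "\<dots> \<le> L * exp (k * s) * D"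
        unfolding D_def using L by (intro mult_left_mono dist_bounded) auto
      finally show ?thesis by (simp add: algebra_simps)
    qed
    then have I: "norm (integral {0..\<tau>} (hZ Z1) - integral {0..\<tau>} (hZ Z2)) \<le> L * D * (exp (k * \<tau>) - 1) / k"
      using integral_exp_weighted_bound[OF \<tau>(1) k, of "\<lambda>s. hZ Z1 s - hZ Z2 s" "L * D"]
      by (simp add: integral_diff hZ_int integrable_diff)
    have "dist (\<Phi> Z1 t) (\<Phi> Z2 t) = exp (- (k * \<tau>)) * norm (integral {0..\<tau>} (hZ Z1) - integral {0..\<tau>} (hZ Z2))"
      by (simp add: \<Phi>_apply FZ_def F0_def \<tau>_def[symmetric] dist_norm scaleR_diff_right[symmetric])
    also have "\<dots> \<le> exp (- (k * \<tau>)) * (L * D * (exp (k * \<tau>) - 1) / k)"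
      by (intro mult_left_mono I) auto
    also have "\<dots> = D / 2 * (1 - exp (- (k * \<tau>)))"
      using L by (simp add: k_def field_simps exp_minus)
    also have "\<dots> \<le> D / 2" by (simp add: D_def mult_left_le)
    finally show "dist (\<Phi> Z1 t) (\<Phi> Z2 t) \<le> 1/2 * dist Z1 Z2" by (simp add: D_def)
  qed
  obtain Z where Z: "\<Phi> Z = Z"
    using banach_fix_type[of "1/2" \<Phi>] contr by auto
  define Y where "Y t = exp (k * cl t) *\<^sub>R Z t" for t
  have "continuous_on {0..1} Y"
    unfolding Y_def by (intro continuous_intros continuous_on_compose2[OF cl_cont]) auto
  moreover have "Y t = y0 + integral {0..t} (\<lambda>s. g (Y s))" if t: "t \<in> {0..1}" for t
  proof -
    have "Z t = FZ Z t" using Z \<Phi>_apply by metis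
    then have "Y t = y0 + integral {0..t} (hZ Z)"
      using t by (simp add: Y_def FZ_def F0_def cl_id exp_minus)
    also have "integral {0..t} (hZ Z) = integral {0..t} (\<lambda>s. g (Y s))"
      by (rule integral_cong) (use t in \<open>auto simp: hZ_def Y_def cl_id\<close>)
    finally show ?thesis .
  qed
  ultimately show ?thesis by (intro exI[of _ Y]) auto
qed

text \<open>First exit argument: up to the first time \<open>\<tau>\<close> with \<open>norm (Y \<tau>) = \<rho>\<close> the growth bound for
  \<open>R\<close> applies, and it keeps \<open>Y \<tau>\<close> in a sublevel set of \<open>R\<close> inside the open ball.\<close>
lemma Lyapunov_confinement:
  fixes Y :: "real \<Rightarrow> 'a::real_normed_vector" and R :: "'a \<Rightarrow> real"
  assumes Yc: "continuous_on {0..1} Y"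
    and dY: "\<And>t. t \<in> {0..1} \<Longrightarrow> norm (Y t) \<le> \<rho> \<Longrightarrow> (Y has_vector_derivative g (Y t)) (at t within {0..1})"
    and dR: "\<And>x. (R has_derivative R' x) (at x)"
    and bnd: "\<And>x. R' x (g x) \<le> R x + a"
    and a: "0 \<le> a" and R0: "\<And>x. 0 \<le> R x"
    and sub: "\<And>x. R x \<le> exp 1 * (R (Y 0) + a) \<Longrightarrow> norm x < \<rho>"
    and Y0: "norm (Y 0) < \<rho>" and t: "t \<in> {0..1}"
  shows "norm (Y t) < \<rho>"
proof (rule ccontr)
  assume "\<not> norm (Y t) < \<rho>"
  define T where "T = {0..1} \<inter> (\<lambda>s. norm (Y s)) -` {\<rho>..}"
  have tT: "t \<in> T" using t \<open>\<not> norm (Y t) < \<rho>\<close> by (auto simp: T_def)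
  have clT: "closed T" unfolding T_def
    by (rule continuous_closed_preimage) (auto intro: continuous_intros Yc)
  have bddT: "bdd_below T" by (rule bdd_belowI[of _ 0]) (auto simp: T_def)
  define \<tau> where "\<tau> = Inf T"
  have \<tau>T: "\<tau> \<in> T" unfolding \<tau>_def using closed_contains_Inf[OF _ bddT clT] tT by blast
  have \<tau>pos: "0 < \<tau>" using \<tau>T Y0 by (cases "\<tau> = 0") (auto simp: T_def)
  have \<tau>1: "\<tau> \<le> 1" using \<tau>T by (auto simp: T_def)
  have below: "norm (Y s) < \<rho>" if "s \<in> {0..<\<tau>}" for s
    using cInf_lower[OF _ bddT, of s] that \<tau>1 by (force simp: T_def \<tau>_def)
  define K where "K = {0..1} \<inter> (\<lambda>s. norm (Y s)) -` {..\<rho>}"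
  have "closed K" unfolding K_def
    by (rule continuous_closed_preimage) (auto intro: continuous_intros Yc)
  moreover have "{0..<\<tau>} \<subseteq> K" using below \<tau>1 by (auto simp: K_def less_imp_le)
  ultimately have "closure {0..<\<tau>} \<subseteq> K" using closure_minimal by blast
  then have inball: "norm (Y s) \<le> \<rho>" if "s \<in> {0..\<tau>}" for s
    using \<tau>pos that by (auto simp: K_def)
  have "R (Y \<tau>) + a \<le> exp (1 * \<tau>) * (R (Y 0) + a)"
  proof (rule Lyapunov_exp_growth[where Y'="\<lambda>s. g (Y s)" and R'=R', OF _ _ dR])
    show "0 \<le> \<tau>" using \<tau>pos by simp
    fix s assume s: "s \<in> {0..\<tau>}"
    have "(Y has_vector_derivative g (Y s)) (at s within {0..1})"
      using dY[of s] inball[OF s] s \<tau>1 by auto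
    then show "(Y has_vector_derivative g (Y s)) (at s within {0..\<tau>})"
      by (rule has_vector_derivative_within_subset) (use \<tau>1 in auto)
    show "R' (Y s) (g (Y s)) \<le> 1 * (R (Y s) + a)" using bnd by simp
  qed
  also have "\<dots> \<le> exp 1 * (R (Y 0) + a)"
    using \<tau>1 a R0[of "Y 0"] by (intro mult_right_mono) auto
  finally have "norm (Y \<tau>) < \<rho>" using a by (intro sub) simp
  then show False using \<tau>T by (auto simp: T_def)
qed

text \<open>Local existence for \<open>Y' = g Y\<close> on \<open>[0, 1]\<close>: solve the equation with \<open>g\<close> composed with the
  projection onto a large ball (globally Lipschitz), then confine the solution to that ball.\<close>
lemma ode_solution_unit_interval:
  fixes g :: "'a::euclidean_space \<Rightarrow> 'a" and R :: "'a \<Rightarrow> real"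
  assumes loclip: "\<And>r. \<exists>L. \<forall>x\<in>cball 0 r. \<forall>y\<in>cball 0 r. norm (g x - g y) \<le> L * norm (x - y)"
    and dR: "\<And>x. (R has_derivative R' x) (at x)"
    and sub: "\<And>C. \<exists>\<rho>. \<forall>x. R x \<le> C \<longrightarrow> norm x < \<rho>"
    and bnd: "\<And>x. R' x (g x) \<le> R x + a"
    and a: "a \<ge> 0" and R0: "\<And>x. R x \<ge> 0"
  shows "\<exists>Y. Y 0 = y0 \<and> (\<forall>t\<in>{0..1}. (Y has_vector_derivative g (Y t)) (at t within {0..1}))"
proof -
  obtain \<rho> where \<rho>: "\<And>x. R x \<le> exp 1 * (R y0 + a) \<Longrightarrow> norm x < \<rho>" using sub by blast
  have "R y0 \<le> 1 * (R y0 + a)" using a by simp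
  also have "\<dots> \<le> exp 1 * (R y0 + a)" using a R0[of y0] by (intro mult_right_mono) auto
  finally have y0\<rho>: "norm y0 < \<rho>" by (rule \<rho>)
  define B where "B = cball (0::'a) \<rho>"
  have "0 \<le> \<rho>" using y0\<rho> norm_ge_zero[of y0] by linarith
  then have B: "convex B" "closed B" "B \<noteq> {}" by (auto simp: B_def)
  obtain L0 where L0: "\<And>x y. x \<in> B \<Longrightarrow> y \<in> B \<Longrightarrow> norm (g x - g y) \<le> L0 * norm (x - y)"
    using loclip[of \<rho>] unfolding B_def by blast
  define L where "L = max L0 1"
  define cp where "cp = closest_point B"
  have cpB: "cp x \<in> B" for x using closest_point_in_set[OF B(2,3)] by (simp add: cp_def)
  have cp_id: "x \<in> B \<Longrightarrow> cp x = x" for x by (simp add: cp_def closest_point_self)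
  have lip: "norm (g (cp x) - g (cp y)) \<le> L * norm (x - y)" for x y
  proof -
    have "norm (g (cp x) - g (cp y)) \<le> L0 * norm (cp x - cp y)" by (rule L0[OF cpB cpB])
    also have "\<dots> \<le> L * norm (cp x - cp y)" by (intro mult_right_mono) (auto simp: L_def)
    also have "norm (cp x - cp y) \<le> norm (x - y)"
      using closest_point_lipschitz[OF B, of x y] by (simp add: cp_def dist_norm)
    then have "L * norm (cp x - cp y) \<le> L * norm (x - y)" by (intro mult_left_mono) (auto simp: L_def)
    finally show ?thesis .
  qed
  have "L-lipschitz_on UNIV (\<lambda>x. g (cp x))" using lip by (auto simp: lipschitz_on_def dist_norm L_def)
  then have gcp_cont: "continuous_on UNIV (\<lambda>x. g (cp x))" by (rule lipschitz_on_continuous_on)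
  have "L > 0" by (simp add: L_def)
  then obtain Y :: "real \<Rightarrow> 'a" where Yc: "continuous_on {0..1} Y"
    and Yi: "\<And>t. t \<in> {0..1} \<Longrightarrow> Y t = y0 + integral {0..t} (\<lambda>s. g (cp (Y s)))"
    using lipschitz_integral_equation_solution[of L "\<lambda>x. g (cp x)" y0] lip by blast
  have Y0: "Y 0 = y0" using Yi[of 0] by simp
  have dY: "(Y has_vector_derivative g (cp (Y t))) (at t within {0..1})" if t: "t \<in> {0..1}" for t
  proof (rule has_vector_derivative_transform[OF t])
    show "Y x = y0 + integral {0..x} (\<lambda>s. g (cp (Y s)))" if "x \<in> {0..1}" for x using Yi that .
    have "continuous_on {0..1} (\<lambda>s. g (cp (Y s)))"
      by (rule continuous_on_compose2[OF gcp_cont Yc]) auto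
    then show "((\<lambda>x. y0 + integral {0..x} (\<lambda>s. g (cp (Y s)))) has_vector_derivative g (cp (Y t))) (at t within {0..1})"
      using integral_has_vector_derivative[OF _ t] by (auto intro!: derivative_eq_intros)
  qed
  have dY_in: "(Y has_vector_derivative g (Y t)) (at t within {0..1})"
    if "t \<in> {0..1}" "norm (Y t) \<le> \<rho>" for t
    using dY[OF that(1)] cp_id[of "Y t"] that(2) by (simp add: B_def)
  have "norm (Y t) < \<rho>" if "t \<in> {0..1}" for t
    by (rule Lyapunov_confinement[OF Yc dY_in dR bnd a R0 _ _ that]) (use \<rho> Y0 y0\<rho> in simp_all)
  then show ?thesis using Y0 dY_in by (intro exI[of _ Y]) (auto simp: less_imp_le)
qed

lemma has_vector_derivative_glue_unit_intervals:
  assumes d: "\<And>n t. t \<in> {real n..real n + 1} \<Longrightarrow> (Z has_vector_derivative D t) (at t within {real n..real n + 1})"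
    and t0: "0 \<le> t"
  shows "(Z has_vector_derivative D t) (at t within {0..})"
proof -
  define n where "n = nat \<lfloor>t\<rfloor>"
  have tn: "real n \<le> t" "t < real n + 1" using t0 by (auto simp: n_def)
  consider "real n < t" | "t = 0" | m where "t = real n" "n = Suc m"
    using tn by (cases n) force+
  then show ?thesis
  proof cases
    case 1
    have "at t within {0..} = at t within {real n..real n + 1}"
      by (rule at_within_nhd[where S="{real n<..<real n + 1}"]) (use 1 tn in auto)
    then show ?thesis using d[of t n] tn by simp
  next
    case 2
    have "at t within {0..} = at t within {real 0..real 0 + 1}"
      by (rule at_within_nhd[where S="{-1<..<1}"]) (use 2 in auto)
    then show ?thesis using d[of t 0] 2 by simp
  next
    case 3
    have "(Z has_vector_derivative D t) (at t within ({real m..real m + 1} \<union> {real n..real n + 1}))"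
      by (intro has_vector_derivative_within_Un d) (use 3 tn in auto)
    moreover have "at t within {0..} = at t within ({real m..real m + 1} \<union> {real n..real n + 1})"
      by (rule at_within_nhd[where S="{real m<..<real n + 1}"]) (use 3 in auto)
    ultimately show ?thesis by simp
  qed
qed

lemma ode_solution_from_unit_steps:
  assumes step: "\<And>y. \<exists>Y. Y 0 = y \<and> (\<forall>t\<in>{0..1}. (Y has_vector_derivative g (Y t)) (at t within {0..1}))"
  shows "\<exists>Y. Y 0 = y0 \<and> (\<forall>t\<ge>0. (Y has_vector_derivative g (Y t)) (at t within {0..}))"
proof -
  obtain sol where sol0: "\<And>y. sol y 0 = y"
    and sold: "\<And>y t. t \<in> {0..1} \<Longrightarrow> (sol y has_vector_derivative g (sol y t)) (at t within {0..1})"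
    using step by metis
  define pts where "pts = rec_nat y0 (\<lambda>n y. sol y 1)"
  have pts0: "pts 0 = y0" and ptsS: "pts (Suc n) = sol (pts n) 1" for n by (simp_all add: pts_def)
  define Z where "Z t = sol (pts (nat \<lfloor>t\<rfloor>)) (t - of_int \<lfloor>t\<rfloor>)" for t :: real
  have Zn: "Z t = sol (pts n) (t - real n)" if "t \<in> {real n..real n + 1}" for n t
  proof (cases "t < real n + 1")
    case True
    then have "\<lfloor>t\<rfloor> = int n" using that by (simp add: floor_eq_iff)
    then show ?thesis by (simp add: Z_def)
  next
    case False
    then have t: "t = real (Suc n)" using that by auto
    have "\<lfloor>t\<rfloor> = int (Suc n)" unfolding t by simp
    then have "Z t = sol (pts (nat (int (Suc n)))) 0" by (simp add: Z_def t)
    then have "Z t = sol (pts (Suc n)) 0" by (metis nat_int)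
    then show ?thesis by (simp add: sol0 ptsS t)
  qed
  have dZ: "(Z has_vector_derivative g (Z t)) (at t within {real n..real n + 1})"
    if t: "t \<in> {real n..real n + 1}" for n t
  proof (rule has_vector_derivative_transform[OF t])
    show "Z s = sol (pts n) (s - real n)" if "s \<in> {real n..real n + 1}" for s using Zn[OF that] .
    have "((\<lambda>s. sol (pts n) (s - real n)) has_vector_derivative g (sol (pts n) (t - real n)))
        (at t within plus (real n) ` {0..1})"
      by (rule has_vector_derivative_translate) (use t sold in auto)
    then show "((\<lambda>s. sol (pts n) (s - real n)) has_vector_derivative g (Z t)) (at t within {real n..real n + 1})"
      using Zn[OF t] by (simp add: add.commute)
  qed
  have "Z 0 = y0" by (simp add: Z_def sol0 pts0)
  moreover have "(Z has_vector_derivative g (Z t)) (at t within {0..})" if "0 \<le> t" for t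
    using has_vector_derivative_glue_unit_intervals[OF dZ that] .
  ultimately show ?thesis by blast
qed

section \<open>Integral equations and reparametrization\<close>

lemma integrable_on_Icc_of_bounded_below:
  fixes g :: "real \<Rightarrow> 'a::euclidean_space"
  assumes s: "0 < s"
    and int: "\<And>y. y \<in> {0..<s} \<Longrightarrow> g integrable_on {0..y}"
    and bnd: "\<And>y. y \<in> {0..<s} \<Longrightarrow> norm (g y) \<le> K"
  shows "g integrable_on {0..s}"
proof -
  have "norm (g 0) \<le> K" using bnd[of 0] s by simp
  then have K: "0 \<le> K" using norm_ge_zero[of "g 0"] by linarith
  define fk where "fk k y = (if y \<in> {0..s - 1 / real (Suc k)} then g y else 0)" for k y
  define gt where "gt y = (if y < s then g y else 0)" for y
  have below: "y \<in> {0..<s}" if "y \<in> {0..s - 1 / real (Suc k)}" for k y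
  proof -
    have "0 < 1 / real (Suc k)" by simp
    then show ?thesis using that unfolding atLeastLessThan_iff atLeastAtMost_iff by linarith
  qed
  have fki: "fk k integrable_on {0..s}" for k
  proof -
    have "g integrable_on ({0..s - 1 / real (Suc k)} \<inter> {0..s})"
    proof (cases "s - 1 / real (Suc k) < 0")
      case False
      then have "g integrable_on {0..s - 1 / real (Suc k)}" by (intro int) (use below in auto)
      moreover have "{0..s - 1 / real (Suc k)} \<inter> {0..s} = {0..s - 1 / real (Suc k)}" by auto
      ultimately show ?thesis by simp
    qed (simp add: integrable_on_empty)
    then show ?thesis unfolding fk_def by (subst integrable_restrict_Int)
  qed
  have fkb: "norm (fk k y) \<le> K" for k y
  proof (cases "y \<in> {0..s - 1 / real (Suc k)}")
    case True
    then show ?thesis using bnd[OF below[OF True]] unfolding fk_def by (simp only: True if_True)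
  next
    case False
    then show ?thesis by (simp only: fk_def if_False norm_zero K)
  qed
  have fkc: "(\<lambda>k. fk k y) \<longlonglongrightarrow> gt y" if "y \<in> {0..s}" for y
  proof (cases "y < s")
    case True
    obtain n where n: "inverse (real (Suc n)) < s - y" using reals_Archimedean[of "s - y"] True by auto
    have "\<forall>\<^sub>F k in sequentially. fk k y = gt y"
      unfolding eventually_sequentially
    proof (intro exI allI impI)
      fix k assume "n \<le> k"
      then have "1 / real (Suc k) \<le> 1 / real (Suc n)" by (intro divide_left_mono) auto
      then have "y \<le> s - 1 / real (Suc k)" using n by (simp add: inverse_eq_divide)
      then show "fk k y = gt y" using that True by (simp add: fk_def gt_def)
    qed
    then show ?thesis by (rule tendsto_eventually)
  next
    case False
    then have "fk k y = 0" for k using below[of y k] unfolding fk_def by (metis atLeastLessThan_iff)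
    then show ?thesis using False by (simp add: gt_def)
  qed
  have "gt integrable_on {0..s}"
    by (rule dominated_convergence(1)[OF fki _ fkb fkc]) auto
  then show ?thesis
    by (rule integrable_spike_finite[of "{s}", rotated 2]) (auto simp: gt_def)
qed

lemma integral_equation_solution_regular_on:
  fixes P :: "real \<Rightarrow> 'a::euclidean_space"
  assumes hcont: "continuous_on ({0..1} \<times> UNIV) (\<lambda>(y, z). h y z)" and x: "x \<in> {0..1}"
    and int: "(\<lambda>y. h y (P y)) integrable_on {0..x}"
    and Peq: "\<And>y. y \<in> {0..x} \<Longrightarrow> P y = X0 + integral {0..y} (\<lambda>y. h y (P y))"
  shows "continuous_on {0..x} P \<and> (\<forall>y\<in>{0..x}. (P has_vector_derivative h y (P y)) (at y within {0..x}))"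
proof -
  have Pc: "continuous_on {0..x} P"
    by (rule continuous_on_eq[of _ "\<lambda>y. X0 + integral {0..y} (\<lambda>y. h y (P y))"])
       (use indefinite_integral_continuous_1[OF int] Peq in \<open>auto intro!: continuous_intros\<close>)
  have "continuous_on {0..x} (\<lambda>y. (y, P y))" by (intro continuous_intros Pc)
  then have gc: "continuous_on {0..x} (\<lambda>y. h y (P y))"
    using continuous_on_compose2[OF hcont, of "{0..x}" "\<lambda>y. (y, P y)"] x by force
  have "(P has_vector_derivative h y (P y)) (at y within {0..x})" if y: "y \<in> {0..x}" for y
  proof (rule has_vector_derivative_transform[OF y])
    show "P z = X0 + integral {0..z} (\<lambda>y. h y (P y))" if "z \<in> {0..x}" for z using Peq that .
    show "((\<lambda>z. X0 + integral {0..z} (\<lambda>y. h y (P y))) has_vector_derivative h y (P y)) (at y within {0..x})"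
      using integral_has_vector_derivative[OF gc y] by (auto intro!: derivative_eq_intros)
  qed
  then show ?thesis using Pc by blast
qed

text \<open>With the Henstock-Kurzweil integral, a non-integrable integrand has integral \<open>0\<close>, so the
  integral equation alone does not make \<open>P\<close> regular. The a priori bound keeps the integrand
  bounded on the maximal interval of integrability, which is therefore closed, and it cannot end
  before \<open>1\<close> because beyond it \<open>P\<close> would be constant.\<close>
lemma integral_equation_solution_regular:
  fixes P :: "real \<Rightarrow> 'a::euclidean_space" and h :: "real \<Rightarrow> 'a \<Rightarrow> 'a"
  assumes hcont: "continuous_on ({0..1} \<times> UNIV) (\<lambda>(y, z). h y z)"
    and Peq: "\<And>x. x \<in> {0..1} \<Longrightarrow> P x = X0 + integral {0..x} (\<lambda>y. h y (P y))"
    and bound: "\<exists>K. \<forall>x\<in>{0..1}. (\<forall>y\<in>{0..x}. (P has_vector_derivative h y (P y)) (at y within {0..x}))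
                    \<longrightarrow> (\<forall>y\<in>{0..x}. norm (P y) \<le> K)"
  shows "continuous_on {0..1} P \<and> (\<forall>x\<in>{0..1}. (P has_vector_derivative h x (P x)) (at x within {0..1}))"
proof -
  define g where "g y = h y (P y)" for y
  define S where "S = {x\<in>{0..1}. g integrable_on {0..x}}"
  have reg: "continuous_on {0..x} P \<and> (\<forall>y\<in>{0..x}. (P has_vector_derivative g y) (at y within {0..x}))"
    if x: "x \<in> S" for x
  proof -
    have x01: "x \<in> {0..1}" and int: "(\<lambda>y. h y (P y)) integrable_on {0..x}"
      using x by (auto simp: S_def g_def[abs_def])
    have "P y = X0 + integral {0..y} (\<lambda>y. h y (P y))" if "y \<in> {0..x}" for y
      by (rule Peq) (use that x01 in auto)
    then show ?thesis
      unfolding g_def using integral_equation_solution_regular_on[OF hcont x01 int] by blast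
  qed
  obtain K where K: "\<And>x y. x \<in> {0..1} \<Longrightarrow> (\<forall>y\<in>{0..x}. (P has_vector_derivative h y (P y)) (at y within {0..x}))
                    \<Longrightarrow> y \<in> {0..x} \<Longrightarrow> norm (P y) \<le> K"
    using bound by blast
  have PK: "norm (P y) \<le> K" if "y \<in> S" for y
    using K[of y y] reg[OF that] that by (auto simp: S_def g_def)
  have "bounded ((\<lambda>(y, z). h y z) ` ({0..1} \<times> cball 0 K))"
    by (intro compact_imp_bounded compact_continuous_image continuous_on_subset[OF hcont] compact_Times) auto
  then obtain Kh where Kh: "\<And>y z. y \<in> {0..1} \<Longrightarrow> z \<in> cball 0 K \<Longrightarrow> norm (h y z) \<le> Kh"
    unfolding bounded_iff by fastforce
  have gK: "norm (g y) \<le> Kh" if "y \<in> S" for y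
    using Kh[of y "P y"] PK[OF that] that by (auto simp: S_def g_def)
  have S0: "0 \<in> S" using integrable_on_refl[of g "0::real"] by (simp add: S_def)
  have down: "y \<in> S" if "x \<in> S" "y \<in> {0..x}" for x y
    using that integrable_on_subinterval[of g "{0..x}" 0 y] by (auto simp: S_def)
  have Sbdd: "bdd_above S" by (rule bdd_above_mono[OF bdd_above_Icc[of 0 1]]) (auto simp: S_def)
  have S_ne: "S \<noteq> {}" using S0 by blast
  define s where "s = Sup S"
  have s0: "0 \<le> s" unfolding s_def using cSup_upper[OF S0 Sbdd] .
  have s1: "s \<le> 1" unfolding s_def by (intro cSup_least S_ne) (auto simp: S_def)
  have below: "y \<in> S" if y: "y \<in> {0..<s}" for y
  proof -
    obtain x where "x \<in> S" "y < x" using less_cSup_iff[of S y] S_ne Sbdd y by (auto simp: s_def)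
    then show ?thesis using down y by auto
  qed
  have sS: "s \<in> S"
  proof (cases "s = 0")
    case False
    have "g integrable_on {0..s}"
    proof (rule integrable_on_Icc_of_bounded_below[where K=Kh])
      show "0 < s" using False s0 by simp
      show "g integrable_on {0..y}" if "y \<in> {0..<s}" for y using below[OF that] by (simp add: S_def)
      show "norm (g y) \<le> Kh" if "y \<in> {0..<s}" for y using gK[OF below[OF that]] .
    qed
    then show ?thesis using s0 s1 by (simp add: S_def)
  qed (use S0 in simp)
  have "s = 1"
  proof (rule ccontr)
    assume "s \<noteq> 1" then have sl: "s < 1" using s1 by simp
    have Px: "P x = X0" if "x \<in> {s<..1}" for x
    proof -
      have "x \<notin> S" using cSup_upper[OF _ Sbdd, of x] that by (auto simp: s_def)
      then have "\<not> g integrable_on {0..x}" using that s0 by (simp add: S_def)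
      then have "integral {0..x} (\<lambda>y. h y (P y)) = 0"
        unfolding g_def[abs_def] by (rule not_integrable_integral)
      moreover have "P x = X0 + integral {0..x} (\<lambda>y. h y (P y))"
        by (rule Peq) (use that s0 in auto)
      ultimately show ?thesis by simp
    qed
    have "continuous_on {s..1} (\<lambda>y. (y, X0))" by (intro continuous_intros)
    then have "continuous_on {s..1} (\<lambda>y. h y X0)"
      using continuous_on_compose2[OF hcont, of "{s..1}" "\<lambda>y. (y, X0)"] s0 by force
    then have "(\<lambda>y. h y X0) integrable_on {s..1}" by (rule integrable_continuous_real)
    then have "g integrable_on {s..1}"
      by (rule integrable_spike_finite[of "{s}", rotated 2]) (use Px in \<open>auto simp: g_def\<close>)
    then have "g integrable_on {0..1}"
      using Henstock_Kurzweil_Integration.integrable_combine[where a=0 and c=s and b=1 and f=g] sS s0 s1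
      by (auto simp: S_def)
    then have "1 \<le> s" unfolding s_def using cSup_upper[OF _ Sbdd, of 1] by (simp add: S_def)
    then show False using sl by simp
  qed
  then show ?thesis using reg[of 1] sS by (simp add: g_def)
qed

lemma increasing_inverse_has_real_derivative:
  fixes s :: "real \<Rightarrow> real"
  assumes ds: "\<And>x. a < x \<Longrightarrow> x < b \<Longrightarrow> (s has_real_derivative s' x) (at x)"
    and pos: "\<And>x. a < x \<Longrightarrow> x < b \<Longrightarrow> 0 < s' x"
    and cd: "a < c" "c \<le> d" "d < b"
  obtains \<xi> where "\<And>x. x \<in> {c..d} \<Longrightarrow> s x \<in> {s c..s d} \<and> \<xi> (s x) = x"
    "\<And>\<sigma>. \<sigma> \<in> {s c..s d} \<Longrightarrow> \<xi> \<sigma> \<in> {c..d} \<and> s (\<xi> \<sigma>) = \<sigma>"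
    "continuous_on {s c..s d} \<xi>"
    "\<And>\<sigma>. \<sigma> \<in> {s c..s d} \<Longrightarrow> (\<xi> has_real_derivative 1 / s' (\<xi> \<sigma>)) (at \<sigma>)"
proof -
  \<comment> \<open>Inverting on a slightly larger interval makes every point of \<open>{s c..s d}\<close> interior,
    as the inverse function rule requires.\<close>
  define a' where "a' = (a + c) / 2"
  define b' where "b' = (d + b) / 2"
  have ab: "a < a'" "a' < c" "d < b'" "b' < b" using cd by (auto simp: a'_def b'_def)
  have smono: "s x < s y" if "a' \<le> x" "x < y" "y \<le> b'" for x y
  proof (rule DERIV_pos_imp_increasing[OF that(2)])
    fix z assume "x \<le> z" "z \<le> y"
    then have "a < z" "z < b" using that ab by linarith+
    then show "\<exists>D. (s has_real_derivative D) (at z) \<and> 0 < D" using ds pos by blast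
  qed
  have sle: "s x \<le> s y" if "a' \<le> x" "x \<le> y" "y \<le> b'" for x y
    using smono[of x y] that by (cases "x = y") auto
  have scont: "continuous_on {a'..b'} s"
  proof (rule DERIV_atLeastAtMost_imp_continuous_on)
    fix z assume "a' \<le> z" "z \<le> b'"
    then have "a < z" "z < b" using ab by linarith+
    then show "\<exists>D. (s has_real_derivative D) (at z)" using ds by blast
  qed
  have inj: "inj_on s {a'..b'}"
    by (rule inj_onI) (metis atLeastAtMost_iff linorder_neqE_linordered_idom order_less_irrefl smono)
  define \<xi> where "\<xi> = the_inv_into {a'..b'} s"
  have \<xi>c: "continuous_on (s ` {a'..b'}) \<xi>"
    unfolding \<xi>_def by (rule continuous_on_inv_into[OF scont _ inj]) simp
  have ivt: "\<exists>x\<in>{l..u}. s x = y" if "a' \<le> l" "l \<le> u" "u \<le> b'" "s l \<le> y" "y \<le> s u" for l u y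
    using IVT'[of s l y u] that continuous_on_subset[OF scont, of "{l..u}"] by auto
  have \<xi>s: "\<xi> (s x) = x" if "x \<in> {a'..b'}" for x
    unfolding \<xi>_def by (rule the_inv_into_f_f[OF inj that])
  have s\<xi>: "s (\<xi> y) = y" if "y \<in> s ` {a'..b'}" for y
    unfolding \<xi>_def using f_the_inv_into_f[OF inj that] .
  have s_range: "s x \<in> {s c..s d} \<and> \<xi> (s x) = x" if x: "x \<in> {c..d}" for x
    using sle[of c x] sle[of x d] \<xi>s[of x] x ab by auto
  have inS: "\<sigma> \<in> s ` {c..d}" if "\<sigma> \<in> {s c..s d}" for \<sigma>
    using ivt[of c d \<sigma>] that ab cd by auto
  have \<xi>_range: "\<xi> \<sigma> \<in> {c..d} \<and> s (\<xi> \<sigma>) = \<sigma>" if "\<sigma> \<in> {s c..s d}" for \<sigma>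
    using inS[OF that] s_range by auto
  have open_in: "{s a'<..<s b'} \<subseteq> s ` {a'..b'}"
  proof
    fix y assume "y \<in> {s a'<..<s b'}"
    then show "y \<in> s ` {a'..b'}" using ivt[of a' b' y] ab cd by force
  qed
  have "s ` {c..d} \<subseteq> s ` {a'..b'}" using ab by (intro image_mono) auto
  then have "continuous_on {s c..s d} \<xi>"
    using inS by (intro continuous_on_subset[OF \<xi>c]) blast
  moreover have "(\<xi> has_real_derivative 1 / s' (\<xi> \<sigma>)) (at \<sigma>)" if \<sigma>: "\<sigma> \<in> {s c..s d}" for \<sigma>
  proof -
    have x: "\<xi> \<sigma> \<in> {c..d}" "s (\<xi> \<sigma>) = \<sigma>" using \<xi>_range[OF \<sigma>] by auto
    have lo: "s a' < \<sigma>" using smono[of a' c] sle[of c "\<xi> \<sigma>"] x ab by auto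
    have hi: "\<sigma> < s b'" using smono[of d b'] sle[of "\<xi> \<sigma>" d] x ab by auto
    have der: "(s has_real_derivative s' (\<xi> \<sigma>)) (at (\<xi> \<sigma>))" using ds x ab by auto
    have ic: "isCont \<xi> \<sigma>"
    proof (rule continuous_on_interior[OF \<xi>c])
      show "\<sigma> \<in> interior (s ` {a'..b'})"
        using interior_mono[OF open_in] lo hi by (auto simp: interior_open)
    qed
    have "(\<xi> has_real_derivative inverse (s' (\<xi> \<sigma>))) (at \<sigma>)"
    proof (rule DERIV_inverse_function[where f=s and g=\<xi> and x=\<sigma>, OF der _ lo hi _ ic])
      show "s' (\<xi> \<sigma>) \<noteq> 0" using pos[of "\<xi> \<sigma>"] x ab by auto
      fix y assume "s a' < y" "y < s b'"
      then show "s (\<xi> y) = y" using open_in s\<xi> by auto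
    qed
    then show ?thesis by (simp add: inverse_eq_divide)
  qed
  ultimately show ?thesis using that s_range \<xi>_range by blast
qed

text \<open>The arc-length type change of variable \<open>\<sigma> = \<integral>\<^sub>0\<^sup>x \<Gamma>\<close>, with inverse \<open>\<xi>\<close>.\<close>
lemma reparametrization_by_positive_speed:
  fixes \<Gamma> :: "real \<Rightarrow> real"
  assumes \<Gamma>c: "continuous_on {0..1} \<Gamma>" and \<Gamma>pos: "\<And>x. x \<in> {0..1} \<Longrightarrow> 0 < \<Gamma> x"
  obtains S \<xi> where "0 \<le> S" "\<xi> 0 = 0" "\<xi> ` {0..S} = {0..1}" "continuous_on {0..S} \<xi>"
    "\<And>\<sigma>. \<sigma> \<in> {0..S} \<Longrightarrow> (\<xi> has_real_derivative 1 / \<Gamma> (\<xi> \<sigma>)) (at \<sigma>)"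
proof -
  define \<Gamma>e where "\<Gamma>e y = \<Gamma> (max 0 (min 1 y))" for y
  have \<Gamma>ec: "continuous_on UNIV \<Gamma>e" unfolding \<Gamma>e_def
    by (rule continuous_on_compose2[OF \<Gamma>c]) (auto intro!: continuous_intros)
  have \<Gamma>epos: "\<Gamma>e y > 0" for y using \<Gamma>pos by (simp add: \<Gamma>e_def)
  define s where "s x = integral {-2..x} \<Gamma>e - integral {-2..0} \<Gamma>e" for x
  have ds: "(s has_real_derivative \<Gamma>e x) (at x)" if "-2 < x" "x < 3" for x
  proof -
    have "((\<lambda>x. integral {-2..x} \<Gamma>e) has_vector_derivative \<Gamma>e x) (at x within {-2..3})"
      by (rule integral_has_vector_derivative) (use that continuous_on_subset[OF \<Gamma>ec] in auto)
    then have "((\<lambda>x. integral {-2..x} \<Gamma>e) has_real_derivative \<Gamma>e x) (at x)"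
      using that by (simp add: has_real_derivative_iff_has_vector_derivative at_within_Icc_at)
    then show ?thesis unfolding s_def by (auto intro!: derivative_eq_intros)
  qed
  have s0: "s 0 = 0" by (simp add: s_def)
  have "s 0 < s 1" by (rule DERIV_pos_imp_increasing) (use ds \<Gamma>epos in force)+
  obtain \<xi> where \<xi>1: "\<And>x. x \<in> {0..1} \<Longrightarrow> s x \<in> {s 0..s 1} \<and> \<xi> (s x) = x"
    and \<xi>2: "\<And>\<sigma>. \<sigma> \<in> {s 0..s 1} \<Longrightarrow> \<xi> \<sigma> \<in> {0..1} \<and> s (\<xi> \<sigma>) = \<sigma>"
    and \<xi>c: "continuous_on {s 0..s 1} \<xi>"
    and d\<xi>: "\<And>\<sigma>. \<sigma> \<in> {s 0..s 1} \<Longrightarrow> (\<xi> has_real_derivative 1 / \<Gamma>e (\<xi> \<sigma>)) (at \<sigma>)"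
    using increasing_inverse_has_real_derivative[of "-2" 3 s \<Gamma>e 0 1] ds \<Gamma>epos by auto
  show ?thesis
  proof
    show "0 \<le> s 1" using \<open>s 0 < s 1\<close> s0 by simp
    show "\<xi> 0 = 0" using \<xi>1[of 0] s0 by simp
    show "\<xi> ` {0..s 1} = {0..1}"
    proof
      show "\<xi> ` {0..s 1} \<subseteq> {0..1}" using \<xi>2 s0 by auto
      show "{0..1} \<subseteq> \<xi> ` {0..s 1}"
      proof
        fix x :: real assume "x \<in> {0..1}"
        then show "x \<in> \<xi> ` {0..s 1}" using \<xi>1[of x] s0 by (intro image_eqI[of _ _ "s x"]) auto
      qed
    qed
    show "continuous_on {0..s 1} \<xi>" using \<xi>c s0 by simp
    show "(\<xi> has_real_derivative 1 / \<Gamma> (\<xi> \<sigma>)) (at \<sigma>)" if "\<sigma> \<in> {0..s 1}" for \<sigma>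
      using d\<xi>[of \<sigma>] \<xi>2[of \<sigma>] that s0 by (simp add: \<Gamma>e_def)
  qed
qed

lemma has_vector_derivative_glue_at:
  assumes left: "\<sigma> \<le> S \<Longrightarrow> (X has_vector_derivative D) (at \<sigma> within {0..S})"
    and right: "S \<le> \<sigma> \<Longrightarrow> (X has_vector_derivative D) (at \<sigma> within {S..})"
    and S: "0 \<le> S" and \<sigma>: "0 \<le> \<sigma>"
  shows "(X has_vector_derivative D) (at \<sigma> within {0..})"
proof -
  consider "\<sigma> < S" | "\<sigma> = S" | "S < \<sigma>" by linarith
  then show ?thesis
  proof cases
    case 1
    have "at \<sigma> within {0..} = at \<sigma> within {0..S}"
      by (rule at_within_nhd[where S="{..<S}"]) (use 1 \<sigma> in auto)
    then show ?thesis using left 1 by simp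
  next
    case 2
    have "{0..} = {0..S} \<union> {S..}" using S by auto
    then show ?thesis using left right 2 by (simp add: has_vector_derivative_within_Un)
  next
    case 3
    have "at \<sigma> within {0..} = at \<sigma> within {S..}"
      by (rule at_within_nhd[where S="{S<..}"]) (use 3 S in auto)
    then show ?thesis using right 3 by simp
  qed
qed

text \<open>Beyond \<open>S\<close> the actual input to \<open>f\<close> is frozen at its final value \<open>c\<close>: the feedback input
  \<open>c - \<kappa> X\<close> then reproduces the autonomous equation \<open>X' = f X c\<close>.\<close>
lemma ode_solution_extend_to_half_line:
  fixes f :: "'a::euclidean_space \<Rightarrow> real \<Rightarrow> 'a" and Q :: "real \<Rightarrow> 'a"
  assumes ode: "\<And>c y0. \<exists>Y. Y 0 = y0 \<and> (\<forall>t\<ge>0. (Y has_vector_derivative f (Y t) c) (at t within {0..}))"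
    and \<kappa>c: "continuous_on UNIV \<kappa>"
    and S: "0 \<le> S" and \<omega>c: "continuous_on {0..S} \<omega>"
    and dQ: "\<And>\<sigma>. \<sigma> \<in> {0..S} \<Longrightarrow> (Q has_vector_derivative f (Q \<sigma>) (\<kappa> (Q \<sigma>) + \<omega> \<sigma>)) (at \<sigma> within {0..S})"
  obtains X \<omega>' where "continuous_on {0..} \<omega>'" "\<And>\<sigma>. \<sigma> \<in> {0..S} \<Longrightarrow> X \<sigma> = Q \<sigma> \<and> \<omega>' \<sigma> = \<omega> \<sigma>"
    "\<And>\<sigma>. 0 \<le> \<sigma> \<Longrightarrow> (X has_vector_derivative f (X \<sigma>) (\<kappa> (X \<sigma>) + \<omega>' \<sigma>)) (at \<sigma> within {0..})"
proof -
  define c where "c = \<kappa> (Q S) + \<omega> S"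
  obtain Y where Y0: "Y 0 = Q S" and dY: "\<And>t. t \<ge> 0 \<Longrightarrow> (Y has_vector_derivative f (Y t) c) (at t within {0..})"
    using ode[of "Q S" c] by blast
  have Yc: "continuous_on {0..} Y"
    unfolding continuous_on_eq_continuous_within using dY has_vector_derivative_continuous by fastforce
  define X where "X \<sigma> = (if \<sigma> \<le> S then Q \<sigma> else Y (\<sigma> - S))" for \<sigma>
  define \<omega>' where "\<omega>' \<sigma> = (if \<sigma> \<le> S then \<omega> \<sigma> else c - \<kappa> (Y (\<sigma> - S)))" for \<sigma>
  have "continuous_on ({0..S} \<union> {S..}) \<omega>'"
  proof (rule continuous_on_closed_Un)
    show "continuous_on {0..S} \<omega>'"
      by (rule continuous_on_eq[OF \<omega>c]) (auto simp: \<omega>'_def)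
    have "continuous_on {S..} (\<lambda>\<sigma>. c - \<kappa> (Y (\<sigma> - S)))"
      by (intro continuous_intros continuous_on_compose2[OF \<kappa>c] continuous_on_compose2[OF Yc]) auto
    then show "continuous_on {S..} \<omega>'"
      by (rule continuous_on_eq) (auto simp: \<omega>'_def c_def Y0)
  qed auto
  moreover have "{0..S} \<union> {S..} = {0..}" using S by auto
  ultimately have \<omega>'c: "continuous_on {0..} \<omega>'" by simp
  have "(X has_vector_derivative f (X \<sigma>) (\<kappa> (X \<sigma>) + \<omega>' \<sigma>)) (at \<sigma> within {0..})"
    if \<sigma>0: "0 \<le> \<sigma>" for \<sigma>
  proof (rule has_vector_derivative_glue_at[OF _ _ S \<sigma>0])
    assume "\<sigma> \<le> S"
    then have \<sigma>: "\<sigma> \<in> {0..S}" using \<sigma>0 by simp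
    show "(X has_vector_derivative f (X \<sigma>) (\<kappa> (X \<sigma>) + \<omega>' \<sigma>)) (at \<sigma> within {0..S})"
    proof (rule has_vector_derivative_transform[OF \<sigma>])
      show "X x = Q x" if "x \<in> {0..S}" for x using that by (simp add: X_def)
      show "(Q has_vector_derivative f (X \<sigma>) (\<kappa> (X \<sigma>) + \<omega>' \<sigma>)) (at \<sigma> within {0..S})"
        using dQ[OF \<sigma>] \<sigma> by (simp add: X_def \<omega>'_def)
    qed
  next
    assume \<sigma>: "S \<le> \<sigma>"
    show "(X has_vector_derivative f (X \<sigma>) (\<kappa> (X \<sigma>) + \<omega>' \<sigma>)) (at \<sigma> within {S..})"
    proof (rule has_vector_derivative_transform[of \<sigma>])
      show "\<sigma> \<in> {S..}" using \<sigma> by simp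
      show "X x = Y (x - S)" if "x \<in> {S..}" for x using that Y0 by (auto simp: X_def)
      have "((\<lambda>x. Y (x - S)) has_vector_derivative f (Y (\<sigma> - S)) c) (at \<sigma> within plus S ` {0..})"
        by (rule has_vector_derivative_translate) (use \<sigma> dY in auto)
      moreover have "f (Y (\<sigma> - S)) c = f (X \<sigma>) (\<kappa> (X \<sigma>) + \<omega>' \<sigma>)"
        using \<sigma> Y0 by (auto simp: X_def \<omega>'_def c_def)
      ultimately show "((\<lambda>x. Y (x - S)) has_vector_derivative f (X \<sigma>) (\<kappa> (X \<sigma>) + \<omega>' \<sigma>)) (at \<sigma> within {S..})"
        by simp
    qed
  qed
  moreover have "X \<sigma> = Q \<sigma> \<and> \<omega>' \<sigma> = \<omega> \<sigma>" if "\<sigma> \<in> {0..S}" for \<sigma>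
    using that by (simp add: X_def \<omega>'_def)
  ultimately show ?thesis using that \<omega>'c by blast
qed

lemma sup_on_bounds:
  assumes "0 \<le> t" "\<And>\<tau>. \<tau> \<in> {0..t} \<Longrightarrow> \<bar>\<omega> \<tau>\<bar> \<le> B"
  shows "0 \<le> sup_on {0..t} \<omega>" "sup_on {0..t} \<omega> \<le> B"
proof -
  have "bdd_above ((\<lambda>\<tau>. \<bar>\<omega> \<tau>\<bar>) ` {0..t})" using assms(2) by (intro bdd_aboveI2[where M=B]) auto
  then have "\<bar>\<omega> 0\<bar> \<le> sup_on {0..t} \<omega>"
    unfolding sup_on_def by (rule cSUP_upper2[where x=0]) (use assms(1) in auto)
  then show "0 \<le> sup_on {0..t} \<omega>" by linarith
  show "sup_on {0..t} \<omega> \<le> B"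
    unfolding sup_on_def by (rule cSUP_least) (use assms in auto)
qed

lemma has_vector_derivative_reparametrization:
  assumes d\<xi>: "(\<xi> has_real_derivative 1 / \<Gamma> (\<xi> \<sigma>)) (at \<sigma>)"
    and dP: "(P has_vector_derivative \<Gamma> (\<xi> \<sigma>) *\<^sub>R D) (at (\<xi> \<sigma>) within \<xi> ` S)"
    and "\<Gamma> (\<xi> \<sigma>) \<noteq> 0"
  shows "((\<lambda>\<sigma>. P (\<xi> \<sigma>)) has_vector_derivative D) (at \<sigma> within S)"
proof -
  have "(\<xi> has_vector_derivative 1 / \<Gamma> (\<xi> \<sigma>)) (at \<sigma> within S)"
    using d\<xi> by (simp add: has_real_derivative_iff_has_vector_derivative has_vector_derivative_at_within)
  from vector_diff_chain_within[OF this dP] show ?thesis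
    using assms(3) by (simp add: o_def)
qed

text \<open>If \<open>P' = \<Gamma> f (P, \<kappa> P + W)\<close> with \<open>\<Gamma> > 0\<close>, then in the variable \<open>\<sigma> = \<integral>\<Gamma>\<close> the curve \<open>P\<close> is a
  trajectory of the closed loop driven by the input \<open>W\<close>; extended beyond \<open>[0, 1]\<close>, it is
  subject to the ISS estimate.\<close>
lemma ISS_bound_of_reparametrized_solution:
  fixes f :: "'a::euclidean_space \<Rightarrow> real \<Rightarrow> 'a" and \<kappa> :: "'a \<Rightarrow> real" and P :: "real \<Rightarrow> 'a"
  assumes iss: "\<forall>X \<omega>. continuous_on {0..} \<omega> \<longrightarrow>
        (\<forall>t\<ge>0. (X has_vector_derivative f (X t) (\<kappa> (X t) + \<omega> t)) (at t within {0..})) \<longrightarrow>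
        (\<forall>t\<ge>0. norm (X t) \<le> \<beta> (norm (X 0)) t + \<gamma> (sup_on {0..t} \<omega>))"
    and \<beta>: "class_KL \<beta>" and \<gamma>: "class_K \<gamma>"
    and ode: "\<And>c y0. \<exists>Y. Y 0 = y0 \<and> (\<forall>t\<ge>0. (Y has_vector_derivative f (Y t) c) (at t within {0..}))"
    and \<kappa>c: "continuous_on UNIV \<kappa>"
    and \<Gamma>c: "continuous_on {0..1} \<Gamma>" and \<Gamma>pos: "\<And>x. x \<in> {0..1} \<Longrightarrow> \<Gamma> x > 0"
    and Wc: "continuous_on {0..1} W"
    and dP: "\<And>x. x \<in> {0..1} \<Longrightarrow> (P has_vector_derivative \<Gamma> x *\<^sub>R f (P x) (\<kappa> (P x) + W x)) (at x within {0..1})"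
    and Wm: "\<And>x. x \<in> {0..1} \<Longrightarrow> \<bar>W x\<bar> \<le> Wm"
    and x: "x \<in> {0..1}"
  shows "norm (P x) \<le> \<beta> (norm (P 0)) 0 + \<gamma> Wm"
proof -
  obtain S \<xi> where S: "0 \<le> S" and \<xi>0: "\<xi> 0 = 0" and \<xi>im: "\<xi> ` {0..S} = {0..1}"
    and \<xi>c: "continuous_on {0..S} \<xi>"
    and d\<xi>: "\<And>\<sigma>. \<sigma> \<in> {0..S} \<Longrightarrow> (\<xi> has_real_derivative 1 / \<Gamma> (\<xi> \<sigma>)) (at \<sigma>)"
    using reparametrization_by_positive_speed[OF \<Gamma>c \<Gamma>pos] by blast
  have dQ: "((\<lambda>\<sigma>. P (\<xi> \<sigma>)) has_vector_derivative f (P (\<xi> \<sigma>)) (\<kappa> (P (\<xi> \<sigma>)) + W (\<xi> \<sigma>))) (at \<sigma> within {0..S})"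
    if \<sigma>: "\<sigma> \<in> {0..S}" for \<sigma>
  proof -
    have x: "\<xi> \<sigma> \<in> {0..1}" using \<xi>im \<sigma> by blast
    show ?thesis
      by (rule has_vector_derivative_reparametrization[where \<Gamma>=\<Gamma>, OF d\<xi>[OF \<sigma>]]) (use dP[OF x] \<xi>im \<Gamma>pos[OF x] in auto)
  qed
  have \<omega>c: "continuous_on {0..S} (\<lambda>\<sigma>. W (\<xi> \<sigma>))"
    by (rule continuous_on_compose2[OF Wc \<xi>c]) (use \<xi>im in auto)
  obtain X \<omega> where \<omega>: "continuous_on {0..} \<omega>"
    and XQ: "\<And>\<sigma>. \<sigma> \<in> {0..S} \<Longrightarrow> X \<sigma> = P (\<xi> \<sigma>) \<and> \<omega> \<sigma> = W (\<xi> \<sigma>)"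
    and dX: "\<And>\<sigma>. 0 \<le> \<sigma> \<Longrightarrow> (X has_vector_derivative f (X \<sigma>) (\<kappa> (X \<sigma>) + \<omega> \<sigma>)) (at \<sigma> within {0..})"
    using ode_solution_extend_to_half_line[OF ode \<kappa>c S \<omega>c dQ] by metis
  obtain \<sigma> where \<sigma>: "\<sigma> \<in> {0..S}" "\<xi> \<sigma> = x" using \<xi>im x by (metis imageE)
  have \<omega>b: "\<bar>\<omega> \<tau>\<bar> \<le> Wm" if "\<tau> \<in> {0..\<sigma>}" for \<tau>
  proof -
    have "\<tau> \<in> {0..S}" using that \<sigma> by auto
    moreover from this have "\<xi> \<tau> \<in> {0..1}" using \<xi>im by blast
    ultimately show ?thesis using Wm XQ by simp
  qed
  have "\<forall>t\<ge>0. norm (X t) \<le> \<beta> (norm (X 0)) t + \<gamma> (sup_on {0..t} \<omega>)"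
    using iss \<omega> dX by blast
  then have "norm (X \<sigma>) \<le> \<beta> (norm (X 0)) \<sigma> + \<gamma> (sup_on {0..\<sigma>} \<omega>)"
    using \<sigma> by auto
  also have "\<beta> (norm (X 0)) \<sigma> \<le> \<beta> (norm (X 0)) 0"
    using \<beta> \<sigma> unfolding class_KL_def by (auto simp: monotone_on_def)
  also have "\<gamma> (sup_on {0..\<sigma>} \<omega>) \<le> \<gamma> Wm"
    using sup_on_bounds[of \<sigma> \<omega> Wm] \<omega>b \<sigma> by (intro class_K_mono[OF \<gamma>]) auto
  finally show ?thesis using XQ[of \<sigma>] XQ[of 0] \<sigma> S \<xi>0 by simp
qed

section \<open>Continuity, smoothness and sup norms\<close>

lemma bounded_on_cball_of_continuous:
  fixes \<phi> :: "'a::euclidean_space \<Rightarrow> 'b::real_normed_vector"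
  assumes "continuous_on UNIV \<phi>"
  shows "\<exists>K\<ge>0. \<forall>x. norm x \<le> r \<longrightarrow> norm (\<phi> x) \<le> K"
proof -
  have "bounded (\<phi> ` cball 0 r)"
    by (intro compact_imp_bounded compact_continuous_image continuous_on_subset[OF assms]) auto
  then obtain K where K: "\<And>x. x \<in> cball 0 r \<Longrightarrow> norm (\<phi> x) \<le> K" unfolding bounded_iff by blast
  show ?thesis by (intro exI[of _ "max K 0"]) (use K in \<open>force simp: dist_norm\<close>)
qed

lemma small_near_zero_of_continuous:
  fixes \<phi> :: "'a::real_normed_vector \<Rightarrow> 'b::real_normed_vector"
  assumes "continuous_on UNIV \<phi>" "\<phi> 0 = 0" "e > 0"
  shows "\<exists>d>0. \<forall>x. norm x \<le> d \<longrightarrow> norm (\<phi> x) \<le> e"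
proof -
  have "isCont \<phi> 0" using assms(1) by (simp add: continuous_on_eq_continuous_at)
  then obtain d where d: "d > 0" "\<And>x. dist x 0 < d \<Longrightarrow> dist (\<phi> x) (\<phi> 0) < e"
    unfolding continuous_at_eps_delta using assms(3) by blast
  show ?thesis
  proof (intro exI[of _ "d/2"] conjI allI impI)
    fix x :: 'a assume "norm x \<le> d/2"
    then have "norm x < d" using d(1) by simp
    then show "norm (\<phi> x) \<le> e" using d(2)[of x] assms(2) by (simp add: dist_norm)
  qed (use d in auto)
qed

lemma locally_lipschitz_of_C1:
  fixes f :: "'a::euclidean_space \<Rightarrow> real \<Rightarrow> 'a"
  assumes dF: "\<And>z. ((\<lambda>(X, w). f X w) has_derivative blinfun_apply (F' z)) (at z)"
    and F'c: "continuous_on UNIV F'"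
  shows "\<exists>L. \<forall>x\<in>cball 0 r. \<forall>y\<in>cball 0 r. norm (f x c - f y c) \<le> L * norm (x - y)"
proof -
  have "continuous_on UNIV (\<lambda>x::'a. F' (x, c))"
    by (rule continuous_on_compose2[OF F'c]) (auto intro!: continuous_intros)
  then obtain K where K: "\<And>x. norm x \<le> r \<Longrightarrow> norm (F' (x, c)) \<le> K"
    using bounded_on_cball_of_continuous by blast
  have der: "((\<lambda>x. f x c) has_derivative (\<lambda>h. F' (x, c) (h, 0))) (at x within cball 0 r)" for x
  proof -
    have "((\<lambda>x::'a. (x, c)) has_derivative (\<lambda>h. (h, 0))) (at x)"
      by (auto intro!: derivative_eq_intros)
    from diff_chain_at[OF this dF[of "(x, c)"]]
    show ?thesis by (simp add: o_def has_derivative_at_withinI)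
  qed
  have "onorm (\<lambda>h. F' (x, c) (h, 0)) \<le> K" if "x \<in> cball 0 r" for x
  proof (rule onorm_le)
    fix h :: 'a
    have "norm (F' (x, c) (h, 0)) \<le> norm (F' (x, c)) * norm (h, 0::real)" by (rule norm_blinfun)
    also have "norm (h, 0::real) = norm h" by (simp add: norm_Pair)
    also have "norm (F' (x, c)) * norm h \<le> K * norm h"
      using K[of x] that by (intro mult_right_mono) auto
    finally show "norm (F' (x, c) (h, 0)) \<le> K * norm h" .
  qed
  then show ?thesis
    by (intro exI[of _ K] ballI differentiable_bound[OF convex_cball der]) auto
qed

lemma C1_on_UNIV_continuous:
  assumes "C1_on UNIV g"
  shows "continuous_on UNIV g"
proof -
  obtain g' where "\<And>z. (g has_derivative blinfun_apply (g' z)) (at z)"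
    using assms unfolding C1_on_def by blast
  then show ?thesis by (intro has_derivative_continuous_on) auto
qed

lemma C2_on_UNIV_derivative:
  "C2_on UNIV g \<Longrightarrow> \<exists>g'. (\<forall>z. (g has_derivative blinfun_apply (g' z)) (at z)) \<and> continuous_on UNIV g'"
  using C1_on_UNIV_continuous unfolding C2_on_def by blast

lemma C2_on_UNIV_real_continuous:
  fixes v :: "real \<Rightarrow> real"
  assumes "C2_on UNIV v"
  shows "continuous_on UNIV v" "continuous_on UNIV (deriv v)"
proof -
  obtain v' where dv: "\<And>z. (v has_derivative blinfun_apply (v' z)) (at z)" and v'c: "continuous_on UNIV v'"
    using C2_on_UNIV_derivative[OF assms] by blast
  then show "continuous_on UNIV v" by (intro has_derivative_continuous_on) auto
  have "deriv v z = v' z 1" for z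
  proof (rule DERIV_imp_deriv)
    have "blinfun_apply (v' z) = (\<lambda>h. v' z 1 * h)"
      by (metis blinfun.scaleR_right mult.commute real_scaleR_def mult.right_neutral)
    then show "(v has_real_derivative v' z 1) (at z)"
      using dv[of z] by (simp add: has_field_derivative_def)
  qed
  moreover have "continuous_on UNIV (\<lambda>z. v' z 1)" using v'c by (intro continuous_intros)
  ultimately show "continuous_on UNIV (deriv v)" by simp
qed

lemma abs_le_supnorm01:
  assumes "continuous_on {0..1} g" "x \<in> {0..1}"
  shows "\<bar>g x\<bar> \<le> supnorm01 g"
proof -
  have "bounded (g ` {0..1})" by (intro compact_imp_bounded compact_continuous_image assms(1)) auto
  then obtain K where K: "\<And>y. y \<in> {0..1} \<Longrightarrow> \<bar>g y\<bar> \<le> K"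
    unfolding bounded_iff by (auto simp del: atLeastAtMost_iff)
  have "bdd_above ((\<lambda>y. \<bar>g y\<bar>) ` {0..1})" by (intro bdd_aboveI2[where M=K]) (use K in auto)
  then show ?thesis unfolding supnorm01_def by (rule cSUP_upper[OF assms(2)])
qed

lemma supnorm01_le: "(\<And>x. x \<in> {0..1} \<Longrightarrow> \<bar>g x\<bar> \<le> B) \<Longrightarrow> supnorm01 g \<le> B"
  unfolding supnorm01_def by (rule cSUP_least) auto

definition state_norm :: "'a::real_normed_vector \<Rightarrow> (real \<Rightarrow> real) \<Rightarrow> (real \<Rightarrow> real) \<Rightarrow> real" where
  "state_norm X0 u ux = norm X0 + supnorm01 u + supnorm01 ux"

lemma state_norm_ge:
  assumes "continuous_on {0..1} u" "continuous_on {0..1} ux"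
  shows "norm X \<le> state_norm X u ux" "\<And>x. x \<in> {0..1} \<Longrightarrow> \<bar>u x\<bar> \<le> state_norm X u ux"
    "\<And>x. x \<in> {0..1} \<Longrightarrow> \<bar>ux x\<bar> \<le> state_norm X u ux" "0 \<le> state_norm X u ux"
proof -
  have u0: "0 \<le> supnorm01 u" and ux0: "0 \<le> supnorm01 ux"
    using abs_le_supnorm01[OF assms(1), of 0] abs_le_supnorm01[OF assms(2), of 0] by auto
  then show "norm X \<le> state_norm X u ux" "0 \<le> state_norm X u ux"
    unfolding state_norm_def using norm_ge_zero[of X] by linarith+
  show "\<bar>u x\<bar> \<le> state_norm X u ux" if "x \<in> {0..1}" for x
    using abs_le_supnorm01[OF assms(1) that] ux0 norm_ge_zero[of X] unfolding state_norm_def by linarith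
  show "\<bar>ux x\<bar> \<le> state_norm X u ux" if "x \<in> {0..1}" for x
    using abs_le_supnorm01[OF assms(2) that] u0 norm_ge_zero[of X] unfolding state_norm_def by linarith
qed

lemma state_norm_le:
  assumes "norm X \<le> a" "\<And>x. x \<in> {0..1} \<Longrightarrow> \<bar>u x\<bar> \<le> b" "\<And>x. x \<in> {0..1} \<Longrightarrow> \<bar>ux x\<bar> \<le> c"
  shows "state_norm X u ux \<le> a + b + c"
  using assms(1) supnorm01_le[of u b, OF assms(2)] supnorm01_le[of ux c, OF assms(3)]
  unfolding state_norm_def by linarith

section \<open>The closed loop at a fixed time\<close>

locale closed_loop_data =
  fixes f :: "'a::euclidean_space \<Rightarrow> real \<Rightarrow> 'a" and v :: "real \<Rightarrow> real" and \<kappa> :: "'a \<Rightarrow> real"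
    and M :: real and vlow :: real and R :: "'a \<Rightarrow> real" and R' :: "'a \<Rightarrow> 'a \<Rightarrow> real"
    and \<alpha>1 :: "real \<Rightarrow> real" and \<alpha>2 :: "real \<Rightarrow> real" and \<alpha>3 :: "real \<Rightarrow> real"
    and \<kappa>d :: "'a \<Rightarrow> 'a \<Rightarrow>\<^sub>L real" and \<beta> :: "real \<Rightarrow> real \<Rightarrow> real" and \<gamma> :: "real \<Rightarrow> real"
  assumes f_cont: "continuous_on UNIV (\<lambda>(X, w). f X w)"
    and f_loclip: "\<And>r c. \<exists>L. \<forall>x\<in>cball 0 r. \<forall>y\<in>cball 0 r. norm (f x c - f y c) \<le> L * norm (x - y)"
    and f00: "f 0 0 = 0"
    and vlow: "vlow > 0" and v_ge: "\<And>s. vlow \<le> v s"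
    and v_cont: "continuous_on UNIV v" and dv_cont: "continuous_on UNIV (deriv v)"
    and M: "M > 0"
    and dR: "\<And>x. (R has_derivative R' x) (at x)"
    and R_nonneg: "\<And>x. 0 \<le> R x" and R_lower: "\<And>x. \<alpha>1 (norm x) \<le> R x" and R_upper: "\<And>x. R x \<le> \<alpha>2 (norm x)"
    and R_f: "\<And>X \<omega>. R' X (f X \<omega>) \<le> R X + \<alpha>3 \<bar>\<omega>\<bar>"
    and \<alpha>1: "class_K_inf \<alpha>1" and \<alpha>2: "class_K_inf \<alpha>2" and \<alpha>3: "class_K_inf \<alpha>3"
    and d\<kappa>: "\<And>x. (\<kappa> has_derivative blinfun_apply (\<kappa>d x)) (at x)"
    and \<kappa>d_cont: "continuous_on UNIV \<kappa>d"
    and \<kappa>0: "\<kappa> 0 = 0"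
    and \<beta>: "class_KL \<beta>" and \<gamma>: "class_K \<gamma>"
    and iss: "\<forall>X \<omega>. continuous_on {0..} \<omega> \<longrightarrow>
        (\<forall>t\<ge>0. (X has_vector_derivative f (X t) (\<kappa> (X t) + \<omega> t)) (at t within {0..})) \<longrightarrow>
        (\<forall>t\<ge>0. norm (X t) \<le> \<beta> (norm (X 0)) t + \<gamma> (sup_on {0..t} \<omega>))"
begin

text \<open>Upper bound for the weight \<open>Gamma\<close> under the slope constraint \<open>-M < v' u\<^sub>x / v < 1\<close>.\<close>
definition Gmax :: real where "Gmax = (1 + M) / vlow"

lemma Gmax_pos: "Gmax > 0" using M vlow by (simp add: Gmax_def)

lemma \<kappa>_cont: "continuous_on UNIV \<kappa>"
  using d\<kappa> by (intro has_derivative_continuous_on) auto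

lemma \<alpha>3_class_K: "class_K \<alpha>3" using \<alpha>3 by (rule class_K_inf_imp_class_K)

lemma R_sublevel_bounded: "\<exists>\<rho>. \<forall>x. R x \<le> C \<longrightarrow> norm x < \<rho>"
proof -
  obtain \<rho> where \<rho>: "\<forall>r\<ge>0. \<alpha>1 r \<le> C \<longrightarrow> r < \<rho>" using class_K_inf_sublevel_bounded[OF \<alpha>1] by blast
  show ?thesis
  proof (intro exI allI impI)
    fix x assume "R x \<le> C"
    then have "\<alpha>1 (norm x) \<le> C" using R_lower[of x] by linarith
    then show "norm x < \<rho>" using \<rho> by simp
  qed
qed

lemma ode_solution_constant_input:
  "\<exists>Y. Y 0 = y0 \<and> (\<forall>t\<ge>0. (Y has_vector_derivative f (Y t) c) (at t within {0..}))"
proof (rule ode_solution_from_unit_steps)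
  have "0 \<le> \<alpha>3 \<bar>c\<bar>" using class_K_nonneg[OF \<alpha>3_class_K] by simp
  then show "\<exists>Y. Y 0 = y \<and> (\<forall>t\<in>{0..1}. (Y has_vector_derivative f (Y t) c) (at t within {0..1}))" for y
    by (intro ode_solution_unit_interval[where R=R and R'=R' and a="\<alpha>3 \<bar>c\<bar>"])
       (use f_loclip dR R_sublevel_bounded R_f R_nonneg in auto)
qed

lemma f_bound_of_pair_bound:
  assumes "\<And>z. norm z \<le> B \<Longrightarrow> norm ((\<lambda>(X, w). f X w) z) \<le> K" "norm q + \<bar>w\<bar> \<le> B"
  shows "norm (f q w) \<le> K"
  using assms(1)[of "(q, w)"] norm_Pair_le[of q w] assms(2) by simp

end

text \<open>One time slice \<open>U = u(\<cdot>, t)\<close>, \<open>Ux = u\<^sub>x(\<cdot>, t)\<close>, \<open>P = p(\<cdot>, t)\<close>, \<open>X0 = X(t)\<close>, with \<open>Wx\<close> the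
  derivative of \<open>W = U - \<kappa> \<circ> P\<close>.\<close>
locale closed_loop_slice = closed_loop_data +
  fixes U Ux Wx :: "real \<Rightarrow> real" and P :: "real \<Rightarrow> 'a::euclidean_space" and X0 :: "'a"
  assumes U_cont: "continuous_on {0..1} U" and Ux_cont: "continuous_on {0..1} Ux"
    and dU: "\<And>x. x \<in> {0..1} \<Longrightarrow> (U has_real_derivative Ux x) (at x within {0..1})"
    and slope: "\<And>x. x \<in> {0..1} \<Longrightarrow> -M < deriv v (U x) * Ux x / v (U x) \<and> deriv v (U x) * Ux x / v (U x) < 1"
    and P_eq: "\<And>x. x \<in> {0..1} \<Longrightarrow> P x = X0 + integral {0..x} (\<lambda>y. Gamma v (U y) (Ux y) y *\<^sub>R f (P y) (U y))"
    and dW: "\<And>x. x \<in> {0..1} \<Longrightarrow> ((\<lambda>y. U y - \<kappa> (P y)) has_real_derivative Wx x) (at x within {0..1})"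
begin

definition \<Gamma> :: "real \<Rightarrow> real" where "\<Gamma> x = Gamma v (U x) (Ux x) x"

lemma \<Gamma>_bounds:
  assumes x: "x \<in> {0..1}"
  shows "0 < \<Gamma> x" "\<Gamma> x \<le> Gmax"
proof -
  define V where "V = v (U x)"
  define r where "r = deriv v (U x) * Ux x / V"
  have V: "V > 0" "vlow \<le> V" using vlow v_ge[of "U x"] by (auto simp: V_def)
  have r: "-M < r" "r < 1" using slope[OF x] by (auto simp: r_def V_def)
  have \<Gamma>_eq: "\<Gamma> x = (1 - x * r) / V"
    using V by (simp add: \<Gamma>_def Gamma_def r_def V_def field_simps power2_eq_square)
  have x01: "0 \<le> x" "x \<le> 1" using x by auto
  have "x * r < 1"
  proof (cases "r \<ge> 0")
    case True
    then have "x * r \<le> 1 * r" using x01 by (intro mult_right_mono) auto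
    then show ?thesis using r by simp
  next
    case False
    then have "x * r \<le> 0" using x01 by (simp add: mult_nonneg_nonpos)
    then show ?thesis by simp
  qed
  moreover have "-M < x * r"
  proof (cases "r \<ge> 0")
    case True
    then have "0 \<le> x * r" using x01 by simp
    then show ?thesis using M by simp
  next
    case False
    then have "1 * r \<le> x * r" using x01 by (intro mult_right_mono_neg) auto
    then show ?thesis using r by simp
  qed
  ultimately show "0 < \<Gamma> x" using V by (simp add: \<Gamma>_eq)
  have "\<Gamma> x \<le> (1 + M) / V" unfolding \<Gamma>_eq using \<open>-M < x * r\<close> V by (intro divide_right_mono) auto
  also have "\<dots> \<le> Gmax" unfolding Gmax_def using V vlow M by (intro divide_left_mono) auto
  finally show "\<Gamma> x \<le> Gmax" .
qed

lemma \<Gamma>_cont: "continuous_on {0..1} \<Gamma>"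
proof -
  have "v (U x) \<noteq> 0" for x using vlow v_ge[of "U x"] by simp
  moreover have "continuous_on {0..1} (\<lambda>x. v (U x))"
    by (rule continuous_on_compose2[OF v_cont U_cont]) auto
  moreover have "continuous_on {0..1} (\<lambda>x. deriv v (U x))"
    by (rule continuous_on_compose2[OF dv_cont U_cont]) auto
  ultimately show ?thesis
    unfolding \<Gamma>_def[abs_def] Gamma_def by (intro continuous_intros Ux_cont) auto
qed

lemma R_along_P_le:
  assumes Um: "\<forall>y\<in>{0..1}. \<bar>U y\<bar> \<le> Um" and x: "x \<in> {0..1}"
    and dP: "\<forall>y\<in>{0..x}. (P has_vector_derivative \<Gamma> y *\<^sub>R f (P y) (U y)) (at y within {0..x})"
  shows "R (P x) \<le> exp Gmax * (R X0 + \<alpha>3 Um)"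
proof -
  have Um0: "0 \<le> Um" using Um abs_ge_zero[of "U 0"] by force
  have A0: "0 \<le> \<alpha>3 Um" using class_K_nonneg[OF \<alpha>3_class_K Um0] .
  have "R (P x) + \<alpha>3 Um \<le> exp (Gmax * x) * (R (P 0) + \<alpha>3 Um)"
  proof (rule Lyapunov_exp_growth[where R'=R', OF _ _ dR])
    show "0 \<le> x" using x by simp
    show "(P has_vector_derivative \<Gamma> s *\<^sub>R f (P s) (U s)) (at s within {0..x})" if "s \<in> {0..x}" for s
      using dP that by blast
    fix s assume s: "s \<in> {0..x}"
    then have s01: "s \<in> {0..1}" using x by auto
    have "linear (R' (P s))" using dR has_derivative_bounded_linear bounded_linear.linear by blast
    then have "R' (P s) (\<Gamma> s *\<^sub>R f (P s) (U s)) = \<Gamma> s * R' (P s) (f (P s) (U s))"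
      by (simp add: linear_scale)
    also have "\<dots> \<le> \<Gamma> s * (R (P s) + \<alpha>3 Um)"
      using R_f[of "P s" "U s"] class_K_mono[OF \<alpha>3_class_K, of "\<bar>U s\<bar>" Um] Um s01 \<Gamma>_bounds[OF s01]
      by (intro mult_left_mono) auto
    also have "\<dots> \<le> Gmax * (R (P s) + \<alpha>3 Um)"
      using \<Gamma>_bounds[OF s01] R_nonneg[of "P s"] A0 by (intro mult_right_mono) auto
    finally show "R' (P s) (\<Gamma> s *\<^sub>R f (P s) (U s)) \<le> Gmax * (R (P s) + \<alpha>3 Um)" .
  qed
  also have "\<dots> \<le> exp Gmax * (R (P 0) + \<alpha>3 Um)"
    using x Gmax_pos R_nonneg[of "P 0"] A0 by (intro mult_right_mono) (auto simp: mult_le_cancel_left1)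
  finally show ?thesis using P_eq[of 0] A0 by simp
qed

lemma P_regular:
  "continuous_on {0..1} P \<and> (\<forall>x\<in>{0..1}. (P has_vector_derivative \<Gamma> x *\<^sub>R f (P x) (U x)) (at x within {0..1}))"
proof (rule integral_equation_solution_regular[where ?X0.0=X0])
  have "continuous_on ({0..1} \<times> UNIV) (\<lambda>p. U (fst p))"
    by (rule continuous_on_compose2[OF U_cont continuous_on_fst]) auto
  then have "continuous_on ({0..1} \<times> UNIV) (\<lambda>p. (snd p, U (fst p)))"
    by (intro continuous_intros)
  from continuous_on_compose2[OF f_cont this]
  have "continuous_on ({0..1} \<times> UNIV) (\<lambda>p. f (snd p) (U (fst p)))" by simp
  moreover have "continuous_on ({0..1} \<times> UNIV) (\<lambda>p. \<Gamma> (fst p))"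
    by (rule continuous_on_compose2[OF \<Gamma>_cont continuous_on_fst]) auto
  ultimately show "continuous_on ({0..1} \<times> UNIV) (\<lambda>(y, z). \<Gamma> y *\<^sub>R f z (U y))"
    using continuous_on_scaleR by (fastforce simp: case_prod_beta)
  show "P x = X0 + integral {0..x} (\<lambda>y. \<Gamma> y *\<^sub>R f (P y) (U y))" if "x \<in> {0..1}" for x
    using P_eq[OF that] by (simp add: \<Gamma>_def)
  have "bounded (U ` {0..1})" by (intro compact_imp_bounded compact_continuous_image U_cont) auto
  then obtain Um where Um: "\<forall>y\<in>{0..1}. \<bar>U y\<bar> \<le> Um" unfolding bounded_iff by auto
  obtain \<rho> where \<rho>: "\<And>z. R z \<le> exp Gmax * (R X0 + \<alpha>3 Um) \<Longrightarrow> norm z < \<rho>"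
    using R_sublevel_bounded by blast
  show "\<exists>K. \<forall>x\<in>{0..1}. (\<forall>y\<in>{0..x}. (P has_vector_derivative \<Gamma> y *\<^sub>R f (P y) (U y)) (at y within {0..x}))
                    \<longrightarrow> (\<forall>y\<in>{0..x}. norm (P y) \<le> K)"
  proof (intro exI[of _ \<rho>] ballI impI)
    fix x y assume x: "x \<in> {0..1}" and y: "y \<in> {0..x}"
      and dP: "\<forall>y\<in>{0..x}. (P has_vector_derivative \<Gamma> y *\<^sub>R f (P y) (U y)) (at y within {0..x})"
    have dPy: "\<forall>z\<in>{0..y}. (P has_vector_derivative \<Gamma> z *\<^sub>R f (P z) (U z)) (at z within {0..y})"
    proof
      fix z assume "z \<in> {0..y}"
      then have "(P has_vector_derivative \<Gamma> z *\<^sub>R f (P z) (U z)) (at z within {0..x})" using dP y by auto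
      then show "(P has_vector_derivative \<Gamma> z *\<^sub>R f (P z) (U z)) (at z within {0..y})"
        by (rule has_vector_derivative_within_subset) (use y in auto)
    qed
    have "y \<in> {0..1}" using x y by auto
    then have "R (P y) \<le> exp Gmax * (R X0 + \<alpha>3 Um)" using R_along_P_le[OF Um _ dPy] by blast
    then show "norm (P y) \<le> \<rho>" using \<rho> by force
  qed
qed

lemma P_cont: "continuous_on {0..1} P"
  using P_regular by blast

lemma dP: "x \<in> {0..1} \<Longrightarrow> (P has_vector_derivative \<Gamma> x *\<^sub>R f (P x) (U x)) (at x within {0..1})"
  using P_regular by blast

lemma R_P_bound:
  assumes "\<forall>y\<in>{0..1}. \<bar>U y\<bar> \<le> Um" "x \<in> {0..1}"
  shows "R (P x) \<le> exp Gmax * (R X0 + \<alpha>3 Um)"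
proof (rule R_along_P_le[OF assms])
  show "\<forall>y\<in>{0..x}. (P has_vector_derivative \<Gamma> y *\<^sub>R f (P y) (U y)) (at y within {0..x})"
  proof
    fix y assume "y \<in> {0..x}"
    then have "y \<in> {0..1}" using assms(2) by auto
    then show "(P has_vector_derivative \<Gamma> y *\<^sub>R f (P y) (U y)) (at y within {0..x})"
      by (rule has_vector_derivative_within_subset[OF dP]) (use assms(2) in auto)
  qed
qed

lemma Wx_eq:
  assumes x: "x \<in> {0..1}"
  shows "Wx x = Ux x - \<kappa>d (P x) (\<Gamma> x *\<^sub>R f (P x) (U x))"
proof -
  have "((\<lambda>y. U y - \<kappa> (P y)) has_real_derivative Ux x - \<kappa>d (P x) (\<Gamma> x *\<^sub>R f (P x) (U x))) (at x within {0..1})"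
    using dU[OF x] has_real_derivative_compose_has_derivative[OF dP[OF x] d\<kappa>] by (rule DERIV_diff)
  then show ?thesis
    using vector_derivative_unique_within_closed_interval[of 0 1 x] dW[OF x] x
    by (auto simp: has_real_derivative_iff_has_vector_derivative)
qed

lemma Wx_cont: "continuous_on {0..1} Wx"
proof -
  have "continuous_on {0..1} (\<lambda>x. \<kappa>d (P x))"
    by (rule continuous_on_compose2[OF \<kappa>d_cont P_cont]) auto
  moreover have "continuous_on {0..1} (\<lambda>x. f (P x) (U x))"
    using continuous_on_compose2[OF f_cont, of "{0..1}" "\<lambda>x. (P x, U x)"] P_cont U_cont
    by (auto intro!: continuous_intros)
  ultimately have "continuous_on {0..1} (\<lambda>x. Ux x - \<kappa>d (P x) (\<Gamma> x *\<^sub>R f (P x) (U x)))"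
    by (intro continuous_intros Ux_cont \<Gamma>_cont)
  then show ?thesis by (rule continuous_on_eq) (use Wx_eq in auto)
qed

lemma W_cont: "continuous_on {0..1} (\<lambda>x. U x - \<kappa> (P x))"
  by (intro continuous_intros U_cont continuous_on_compose2[OF \<kappa>_cont P_cont]) auto

lemma P_ISS_bound:
  assumes "\<forall>y\<in>{0..1}. \<bar>U y - \<kappa> (P y)\<bar> \<le> Wm" "x \<in> {0..1}"
  shows "norm (P x) \<le> \<beta> (norm X0) 0 + \<gamma> Wm"
proof -
  have "norm (P x) \<le> \<beta> (norm (P 0)) 0 + \<gamma> Wm"
  proof (rule ISS_bound_of_reparametrized_solution[OF iss \<beta> \<gamma> ode_solution_constant_input \<kappa>_cont \<Gamma>_cont
        _ W_cont])
    fix y :: real assume y: "y \<in> {0..1}"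
    show "0 < \<Gamma> y" using \<Gamma>_bounds[OF y] by simp
    show "(P has_vector_derivative \<Gamma> y *\<^sub>R f (P y) (\<kappa> (P y) + (U y - \<kappa> (P y)))) (at y within {0..1})"
      using dP[OF y] by simp
    show "\<bar>U y - \<kappa> (P y)\<bar> \<le> Wm" using assms(1) y by blast
  qed (rule assms(2))
  then show ?thesis using P_eq[of 0] by simp
qed

lemma Wx_Ux_diff_le:
  assumes x: "x \<in> {0..1}" and Kd: "norm (\<kappa>d (P x)) \<le> Kd" and PU: "norm (P x) + \<bar>U x\<bar> \<le> B"
    and Kf: "\<And>z. norm z \<le> B \<Longrightarrow> norm ((\<lambda>(X, w). f X w) z) \<le> Kf"
  shows "\<bar>Wx x - Ux x\<bar> \<le> Kd * (Gmax * Kf)"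
proof -
  have "norm (\<Gamma> x *\<^sub>R f (P x) (U x)) = \<Gamma> x * norm (f (P x) (U x))"
    using \<Gamma>_bounds[OF x] by simp
  also have "\<dots> \<le> Gmax * Kf"
    using \<Gamma>_bounds[OF x] f_bound_of_pair_bound[OF Kf PU] by (intro mult_mono) auto
  finally have N: "norm (\<Gamma> x *\<^sub>R f (P x) (U x)) \<le> Gmax * Kf" .
  have "0 \<le> Kd" using Kd norm_ge_zero[of "\<kappa>d (P x)"] by linarith
  have "\<bar>Wx x - Ux x\<bar> = norm (\<kappa>d (P x) (\<Gamma> x *\<^sub>R f (P x) (U x)))"
    using Wx_eq[OF x] by simp
  also have "\<dots> \<le> norm (\<kappa>d (P x)) * norm (\<Gamma> x *\<^sub>R f (P x) (U x))"
    by (rule norm_blinfun)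
  also have "\<dots> \<le> Kd * (Gmax * Kf)"
    using Kd N \<open>0 \<le> Kd\<close> by (intro mult_mono) auto
  finally show ?thesis .
qed

end

context closed_loop_data
begin

abbreviation slice where "slice \<equiv> closed_loop_slice f v \<kappa> M vlow R R' \<alpha>1 \<alpha>2 \<alpha>3 \<kappa>d \<beta> \<gamma>"

lemma \<beta>_class_K: "class_K (\<lambda>r. \<beta> r 0)"
  using \<beta> unfolding class_KL_def by auto

lemma f_zero: "(\<lambda>(X, w). f X w) 0 = 0"
  by (simp add: zero_prod_def f00)

lemma small_gain_factor:
  assumes "0 \<le> K" "0 < e"
  shows "\<exists>\<epsilon>>0. K * (Gmax * \<epsilon>) \<le> e"
proof (intro exI conjI)
  show "0 < e / ((K + 1) * Gmax)" using assms Gmax_pos by simp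
  have "K * (Gmax * (e / ((K + 1) * Gmax))) = e * (K / (K + 1))" using Gmax_pos by simp
  also have "\<dots> \<le> e" using assms by (intro mult_left_le) auto
  finally show "K * (Gmax * (e / ((K + 1) * Gmax))) \<le> e" .
qed

lemma w_norm_bounded:
  "\<exists>C. \<forall>U Ux Wx P X0. slice U Ux Wx P X0 \<longrightarrow> state_norm X0 U Ux \<le> r \<longrightarrow>
     state_norm X0 (\<lambda>x. U x - \<kappa> (P x)) Wx \<le> C"
proof -
  define r' where "r' = max r 0"
  define C1 where "C1 = exp Gmax * (\<alpha>2 r' + \<alpha>3 r')"
  obtain \<rho> where \<rho>: "\<And>q. R q \<le> C1 \<Longrightarrow> norm q < \<rho>" using R_sublevel_bounded by blast
  obtain Kk where Kk: "\<And>q. norm q \<le> \<rho> \<Longrightarrow> norm (\<kappa> q) \<le> Kk"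
    using bounded_on_cball_of_continuous[OF \<kappa>_cont] by blast
  obtain Kd where Kd: "\<And>q. norm q \<le> \<rho> \<Longrightarrow> norm (\<kappa>d q) \<le> Kd"
    using bounded_on_cball_of_continuous[OF \<kappa>d_cont] by blast
  obtain Kf where Kf: "\<And>z. norm z \<le> \<rho> + r' \<Longrightarrow> norm ((\<lambda>(X, w). f X w) z) \<le> Kf"
    using bounded_on_cball_of_continuous[OF f_cont] by blast
  show ?thesis
  proof (intro exI allI impI)
    fix U Ux Wx P X0
    assume sl: "slice U Ux Wx P X0" and \<Omega>: "state_norm X0 U Ux \<le> r"
    interpret closed_loop_slice f v \<kappa> M vlow R R' \<alpha>1 \<alpha>2 \<alpha>3 \<kappa>d \<beta> \<gamma> U Ux Wx P X0 by (rule sl)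
    note \<Omega>_ge = state_norm_ge[OF U_cont Ux_cont, where X=X0]
    have X0r: "norm X0 \<le> r'" using \<Omega>_ge(1) \<Omega> by (simp add: r'_def)
    have Ur: "\<forall>x\<in>{0..1}. \<bar>U x\<bar> \<le> r'" using \<Omega>_ge(2) \<Omega> by (force simp: r'_def)
    have Uxr: "\<bar>Ux x\<bar> \<le> r'" if "x \<in> {0..1}" for x using \<Omega>_ge(3)[OF that] \<Omega> by (simp add: r'_def)
    have RX0: "R X0 \<le> \<alpha>2 r'"
      using R_upper[of X0] class_K_mono[OF class_K_inf_imp_class_K[OF \<alpha>2] _ X0r] by simp
    have P\<rho>: "norm (P x) < \<rho>" if x: "x \<in> {0..1}" for x
    proof (rule \<rho>)
      have "R (P x) \<le> exp Gmax * (R X0 + \<alpha>3 r')" by (rule R_P_bound[OF Ur x])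
      also have "\<dots> \<le> C1" unfolding C1_def using RX0 by (intro mult_left_mono) auto
      finally show "R (P x) \<le> C1" .
    qed
    show "state_norm X0 (\<lambda>x. U x - \<kappa> (P x)) Wx \<le> r' + (r' + Kk) + (r' + Kd * (Gmax * Kf))"
    proof (rule state_norm_le[OF X0r])
      fix x :: real assume x: "x \<in> {0..1}"
      have "\<bar>\<kappa> (P x)\<bar> \<le> Kk" using Kk[of "P x"] P\<rho>[OF x] by simp
      then show "\<bar>U x - \<kappa> (P x)\<bar> \<le> r' + Kk" using Ur x by (smt (verit) bspec)
      have "\<bar>Wx x - Ux x\<bar> \<le> Kd * (Gmax * Kf)"
        by (rule Wx_Ux_diff_le[OF x _ _ Kf]) (use Kd[of "P x"] P\<rho>[OF x] Ur x in force)+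
      then show "\<bar>Wx x\<bar> \<le> r' + Kd * (Gmax * Kf)" using Uxr[OF x] by linarith
    qed
  qed
qed

lemma w_norm_small:
  assumes e: "e > 0"
  shows "\<exists>d>0. \<forall>U Ux Wx P X0. slice U Ux Wx P X0 \<longrightarrow> state_norm X0 U Ux \<le> d \<longrightarrow>
     state_norm X0 (\<lambda>x. U x - \<kappa> (P x)) Wx \<le> e"
proof -
  obtain Kd where Kd0: "Kd \<ge> 0" and Kd: "\<And>q. norm q \<le> 1 \<Longrightarrow> norm (\<kappa>d q) \<le> Kd"
    using bounded_on_cball_of_continuous[OF \<kappa>d_cont, of 1] by blast
  obtain ef where ef: "ef > 0" and Kd_ef: "Kd * (Gmax * ef) \<le> e / 6"
    using small_gain_factor[OF Kd0, of "e/6"] e by auto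
  obtain df where df: "df > 0" "\<And>z. norm z \<le> df \<Longrightarrow> norm ((\<lambda>(X, w). f X w) z) \<le> ef"
    using small_near_zero_of_continuous[OF f_cont f_zero ef] by blast
  obtain dk where dk: "dk > 0" "\<And>q. norm q \<le> dk \<Longrightarrow> norm (\<kappa> q) \<le> e/6"
    using small_near_zero_of_continuous[OF \<kappa>_cont \<kappa>0, of "e/6"] e by auto
  define \<delta>P where "\<delta>P = min 1 (min dk (df/2))"
  have \<delta>P: "\<delta>P > 0" using dk df by (simp add: \<delta>P_def)
  obtain c where c: "c > 0" "\<And>r. r \<ge> 0 \<Longrightarrow> \<alpha>1 r \<le> c \<Longrightarrow> r < \<delta>P"
    using class_K_small_value_imp_small[OF class_K_inf_imp_class_K[OF \<alpha>1] \<delta>P] by blast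
  have ce: "c / (2 * exp Gmax) > 0" using c by simp
  obtain d2 where d2: "d2 > 0" "\<And>x. 0 \<le> x \<Longrightarrow> x \<le> d2 \<Longrightarrow> \<alpha>2 x \<le> c / (2 * exp Gmax)"
    using class_K_small_near_zero[OF class_K_inf_imp_class_K[OF \<alpha>2] ce] by blast
  obtain d3 where d3: "d3 > 0" "\<And>x. 0 \<le> x \<Longrightarrow> x \<le> d3 \<Longrightarrow> \<alpha>3 x \<le> c / (2 * exp Gmax)"
    using class_K_small_near_zero[OF \<alpha>3_class_K ce] by blast
  define d where "d = min (min (e/6) (df/2)) (min d2 d3)"
  have d: "d > 0" using e df d2 d3 by (simp add: d_def)
  show ?thesis
  proof (intro exI[of _ d] conjI allI impI d)
    fix U Ux Wx P X0
    assume sl: "slice U Ux Wx P X0" and \<Omega>: "state_norm X0 U Ux \<le> d"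
    interpret closed_loop_slice f v \<kappa> M vlow R R' \<alpha>1 \<alpha>2 \<alpha>3 \<kappa>d \<beta> \<gamma> U Ux Wx P X0 by (rule sl)
    note \<Omega>_ge = state_norm_ge[OF U_cont Ux_cont, where X=X0]
    have X0r: "norm X0 \<le> d" using \<Omega>_ge(1) \<Omega> by simp
    have Ur: "\<forall>x\<in>{0..1}. \<bar>U x\<bar> \<le> d" using \<Omega>_ge(2) \<Omega> by force
    have Uxr: "\<bar>Ux x\<bar> \<le> d" if "x \<in> {0..1}" for x using \<Omega>_ge(3)[OF that] \<Omega> by simp
    have RX0: "R X0 \<le> c / (2 * exp Gmax)" using R_upper[of X0] d2(2)[of "norm X0"] X0r by (simp add: d_def)
    have a3: "\<alpha>3 d \<le> c / (2 * exp Gmax)" using d3(2)[of d] d by (simp add: d_def)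
    have P\<delta>: "norm (P x) < \<delta>P" if x: "x \<in> {0..1}" for x
    proof (rule c(2))
      have "R (P x) \<le> exp Gmax * (R X0 + \<alpha>3 d)" by (rule R_P_bound[OF Ur x])
      also have "\<dots> \<le> exp Gmax * (c / (2 * exp Gmax) + c / (2 * exp Gmax))"
        using RX0 a3 by (intro mult_left_mono) auto
      also have "\<dots> = c" by simp
      finally show "\<alpha>1 (norm (P x)) \<le> c" using R_lower[of "P x"] by linarith
    qed simp
    have "state_norm X0 (\<lambda>x. U x - \<kappa> (P x)) Wx \<le> e/6 + e/3 + e/3"
    proof (rule state_norm_le)
      show "norm X0 \<le> e/6" using X0r by (simp add: d_def)
      fix x :: real assume x: "x \<in> {0..1}"
      have "norm (\<kappa> (P x)) \<le> e/6" using dk(2)[of "P x"] P\<delta>[OF x] by (simp add: \<delta>P_def)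
      moreover have "\<bar>U x\<bar> \<le> e/6" using Ur x by (force simp: d_def)
      ultimately show "\<bar>U x - \<kappa> (P x)\<bar> \<le> e/3" using abs_triangle_ineq4[of "U x" "\<kappa> (P x)"] by simp
      have "\<bar>Wx x - Ux x\<bar> \<le> Kd * (Gmax * ef)"
        by (rule Wx_Ux_diff_le[OF x _ _ df(2)])
           (use Kd[of "P x"] P\<delta>[OF x] Ur x in \<open>force simp: \<delta>P_def d_def\<close>)+
      moreover have "\<bar>Ux x\<bar> \<le> e/6" using Uxr[OF x] by (simp add: d_def)
      ultimately show "\<bar>Wx x\<bar> \<le> e/3" using Kd_ef by linarith
    qed
    then show "state_norm X0 (\<lambda>x. U x - \<kappa> (P x)) Wx \<le> e" using e by linarith
  qed
qed

lemma u_norm_bounded: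
  "\<exists>C. \<forall>U Ux Wx P X0. slice U Ux Wx P X0 \<longrightarrow> state_norm X0 (\<lambda>x. U x - \<kappa> (P x)) Wx \<le> r \<longrightarrow>
     state_norm X0 U Ux \<le> C"
proof -
  define r' where "r' = max r 0"
  define \<rho> where "\<rho> = \<beta> r' 0 + \<gamma> r'"
  obtain Kk where Kk: "\<And>q. norm q \<le> \<rho> \<Longrightarrow> norm (\<kappa> q) \<le> Kk"
    using bounded_on_cball_of_continuous[OF \<kappa>_cont] by blast
  obtain Kd where Kd: "\<And>q. norm q \<le> \<rho> \<Longrightarrow> norm (\<kappa>d q) \<le> Kd"
    using bounded_on_cball_of_continuous[OF \<kappa>d_cont] by blast
  obtain Kf where Kf: "\<And>z. norm z \<le> \<rho> + (r' + Kk) \<Longrightarrow> norm ((\<lambda>(X, w). f X w) z) \<le> Kf"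
    using bounded_on_cball_of_continuous[OF f_cont] by blast
  show ?thesis
  proof (intro exI allI impI)
    fix U Ux Wx P X0
    assume sl: "slice U Ux Wx P X0" and \<Omega>: "state_norm X0 (\<lambda>x. U x - \<kappa> (P x)) Wx \<le> r"
    interpret closed_loop_slice f v \<kappa> M vlow R R' \<alpha>1 \<alpha>2 \<alpha>3 \<kappa>d \<beta> \<gamma> U Ux Wx P X0 by (rule sl)
    note \<Omega>_ge = state_norm_ge[OF W_cont Wx_cont, where X=X0]
    have X0r: "norm X0 \<le> r'" using \<Omega>_ge(1) \<Omega> by (simp add: r'_def)
    have Wr: "\<forall>x\<in>{0..1}. \<bar>U x - \<kappa> (P x)\<bar> \<le> r'" using \<Omega>_ge(2) \<Omega> by (force simp: r'_def)
    have Wxr: "\<bar>Wx x\<bar> \<le> r'" if "x \<in> {0..1}" for x using \<Omega>_ge(3)[OF that] \<Omega> by (simp add: r'_def)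
    have P\<rho>: "norm (P x) \<le> \<rho>" if x: "x \<in> {0..1}" for x
    proof -
      have "norm (P x) \<le> \<beta> (norm X0) 0 + \<gamma> r'" by (rule P_ISS_bound[OF Wr x])
      also have "\<beta> (norm X0) 0 \<le> \<beta> r' 0" using class_K_mono[OF \<beta>_class_K _ X0r] by simp
      finally show ?thesis by (simp add: \<rho>_def)
    qed
    have Ub: "\<bar>U x\<bar> \<le> r' + Kk" if x: "x \<in> {0..1}" for x
    proof -
      have "\<bar>U x - \<kappa> (P x)\<bar> \<le> r'" using Wr x by blast
      moreover have "\<bar>\<kappa> (P x)\<bar> \<le> Kk" using Kk[OF P\<rho>[OF x]] by simp
      ultimately show ?thesis by linarith
    qed
    show "state_norm X0 U Ux \<le> r' + (r' + Kk) + (r' + Kd * (Gmax * Kf))"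
    proof (rule state_norm_le[OF X0r Ub])
      fix x :: real assume x: "x \<in> {0..1}"
      have "\<bar>Wx x - Ux x\<bar> \<le> Kd * (Gmax * Kf)"
        by (rule Wx_Ux_diff_le[where B="\<rho> + (r' + Kk)", OF x Kd[OF P\<rho>[OF x]] _ Kf])
           (use P\<rho>[OF x] Ub[OF x] in linarith)
      then show "\<bar>Ux x\<bar> \<le> r' + Kd * (Gmax * Kf)" using Wxr[OF x] by linarith
    qed
  qed
qed

lemma u_norm_small:
  assumes e: "e > 0"
  shows "\<exists>d>0. \<forall>U Ux Wx P X0. slice U Ux Wx P X0 \<longrightarrow> state_norm X0 (\<lambda>x. U x - \<kappa> (P x)) Wx \<le> d \<longrightarrow>
     state_norm X0 U Ux \<le> e"
proof -
  obtain Kd where Kd0: "Kd \<ge> 0" and Kd: "\<And>q. norm q \<le> 1 \<Longrightarrow> norm (\<kappa>d q) \<le> Kd"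
    using bounded_on_cball_of_continuous[OF \<kappa>d_cont, of 1] by blast
  obtain ef where ef: "ef > 0" and Kd_ef: "Kd * (Gmax * ef) \<le> e / 6"
    using small_gain_factor[OF Kd0, of "e/6"] e by auto
  obtain df where df: "df > 0" "\<And>z. norm z \<le> df \<Longrightarrow> norm ((\<lambda>(X, w). f X w) z) \<le> ef"
    using small_near_zero_of_continuous[OF f_cont f_zero ef] by blast
  define \<eta> where "\<eta> = min (e/6) (df/4)"
  have \<eta>: "\<eta> > 0" using e df by (simp add: \<eta>_def)
  obtain dk where dk: "dk > 0" "\<And>q. norm q \<le> dk \<Longrightarrow> norm (\<kappa> q) \<le> \<eta>"
    using small_near_zero_of_continuous[OF \<kappa>_cont \<kappa>0 \<eta>] by auto
  define \<delta>P where "\<delta>P = min 1 (min dk (df/2))"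
  have \<delta>P: "\<delta>P / 2 > 0" using dk df by (simp add: \<delta>P_def)
  obtain db where db: "db > 0" "\<And>x. 0 \<le> x \<Longrightarrow> x \<le> db \<Longrightarrow> \<beta> x 0 \<le> \<delta>P / 2"
    using class_K_small_near_zero[OF \<beta>_class_K \<delta>P] by blast
  obtain dg where dg: "dg > 0" "\<And>x. 0 \<le> x \<Longrightarrow> x \<le> dg \<Longrightarrow> \<gamma> x \<le> \<delta>P / 2"
    using class_K_small_near_zero[OF \<gamma> \<delta>P] by blast
  define d where "d = min (min (e/6) (df/4)) (min db dg)"
  have d: "d > 0" using e df db dg by (simp add: d_def)
  show ?thesis
  proof (intro exI[of _ d] conjI allI impI d)
    fix U Ux Wx P X0
    assume sl: "slice U Ux Wx P X0" and \<Omega>: "state_norm X0 (\<lambda>x. U x - \<kappa> (P x)) Wx \<le> d"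
    interpret closed_loop_slice f v \<kappa> M vlow R R' \<alpha>1 \<alpha>2 \<alpha>3 \<kappa>d \<beta> \<gamma> U Ux Wx P X0 by (rule sl)
    note \<Omega>_ge = state_norm_ge[OF W_cont Wx_cont, where X=X0]
    have X0r: "norm X0 \<le> d" using \<Omega>_ge(1) \<Omega> by simp
    have Wr: "\<forall>x\<in>{0..1}. \<bar>U x - \<kappa> (P x)\<bar> \<le> d" using \<Omega>_ge(2) \<Omega> by force
    have Wxr: "\<bar>Wx x\<bar> \<le> d" if "x \<in> {0..1}" for x using \<Omega>_ge(3)[OF that] \<Omega> by simp
    have P\<delta>: "norm (P x) \<le> \<delta>P" if x: "x \<in> {0..1}" for x
    proof -
      have "norm (P x) \<le> \<beta> (norm X0) 0 + \<gamma> d" by (rule P_ISS_bound[OF Wr x])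
      moreover have "\<beta> (norm X0) 0 \<le> \<delta>P / 2" using db(2)[of "norm X0"] X0r by (simp add: d_def)
      moreover have "\<gamma> d \<le> \<delta>P / 2" using dg(2)[of d] d by (simp add: d_def)
      ultimately show ?thesis by linarith
    qed
    have Ub: "\<bar>U x\<bar> \<le> d + \<eta>" if x: "x \<in> {0..1}" for x
    proof -
      have "\<bar>U x - \<kappa> (P x)\<bar> \<le> d" using Wr x by blast
      moreover have "\<bar>\<kappa> (P x)\<bar> \<le> \<eta>" using dk(2)[of "P x"] P\<delta>[OF x] by (simp add: \<delta>P_def)
      ultimately show ?thesis by linarith
    qed
    have "state_norm X0 U Ux \<le> e/6 + e/3 + e/3"
    proof (rule state_norm_le)
      show "norm X0 \<le> e/6" using X0r by (simp add: d_def)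
      fix x :: real assume x: "x \<in> {0..1}"
      have "d + \<eta> \<le> e/3" by (simp add: d_def \<eta>_def)
      then show "\<bar>U x\<bar> \<le> e/3" using Ub[OF x] by linarith
      have "d + \<eta> \<le> df/2" by (simp add: d_def \<eta>_def)
      then have PU: "norm (P x) + \<bar>U x\<bar> \<le> df" using P\<delta>[OF x] Ub[OF x] by (simp add: \<delta>P_def)
      have "\<bar>Wx x - Ux x\<bar> \<le> Kd * (Gmax * ef)"
        by (rule Wx_Ux_diff_le[where B=df, OF x _ PU df(2)]) (use Kd[of "P x"] P\<delta>[OF x] in \<open>simp add: \<delta>P_def\<close>)
      moreover have "\<bar>Wx x\<bar> \<le> e/6" using Wxr[OF x] by (simp add: d_def)
      ultimately show "\<bar>Ux x\<bar> \<le> e/3" using Kd_ef by linarith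
    qed
    then show "state_norm X0 U Ux \<le> e" using e by linarith
  qed
qed

lemma w_norm_class_K_inf_bound:
  "\<exists>\<rho>. class_K_inf \<rho> \<and> (\<forall>U Ux Wx P X0. slice U Ux Wx P X0 \<longrightarrow>
     state_norm X0 (\<lambda>x. U x - \<kappa> (P x)) Wx \<le> \<rho> (state_norm X0 U Ux))"
proof -
  define Rel where "Rel a b \<longleftrightarrow> (\<exists>U Ux Wx P X0. slice U Ux Wx P X0 \<and>
    a = state_norm X0 U Ux \<and> b = state_norm X0 (\<lambda>x. U x - \<kappa> (P x)) Wx)" for a b
  have "\<exists>\<rho>. class_K_inf \<rho> \<and> (\<forall>a b. Rel a b \<longrightarrow> b \<le> \<rho> a)"
  proof (rule class_K_inf_bound_of_relation)
    fix a b assume "Rel a b"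
    then obtain U Ux Wx P X0 where sl: "slice U Ux Wx P X0" and "a = state_norm X0 U Ux"
      unfolding Rel_def by blast
    then show "0 \<le> a"
      using state_norm_ge(4)[OF closed_loop_slice.U_cont[OF sl] closed_loop_slice.Ux_cont[OF sl]] by simp
  next
    fix r
    obtain C where "\<forall>U Ux Wx P X0. slice U Ux Wx P X0 \<longrightarrow> state_norm X0 U Ux \<le> r \<longrightarrow> state_norm X0 (\<lambda>x. U x - \<kappa> (P x)) Wx \<le> C"
      using w_norm_bounded by blast
    then show "\<exists>C. \<forall>a b. Rel a b \<longrightarrow> a \<le> r \<longrightarrow> b \<le> C" unfolding Rel_def by blast
  next
    fix e :: real assume "e > 0"
    then obtain d where "d > 0" "\<forall>U Ux Wx P X0. slice U Ux Wx P X0 \<longrightarrow> state_norm X0 U Ux \<le> d \<longrightarrow> state_norm X0 (\<lambda>x. U x - \<kappa> (P x)) Wx \<le> e"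
      using w_norm_small by blast
    then show "\<exists>d>0. \<forall>a b. Rel a b \<longrightarrow> a \<le> d \<longrightarrow> b \<le> e" unfolding Rel_def by blast
  qed
  then show ?thesis unfolding Rel_def by blast
qed

lemma u_norm_class_K_inf_bound:
  "\<exists>\<rho>. class_K_inf \<rho> \<and> (\<forall>U Ux Wx P X0. slice U Ux Wx P X0 \<longrightarrow>
     state_norm X0 U Ux \<le> \<rho> (state_norm X0 (\<lambda>x. U x - \<kappa> (P x)) Wx))"
proof -
  define Rel where "Rel a b \<longleftrightarrow> (\<exists>U Ux Wx P X0. slice U Ux Wx P X0 \<and>
    a = state_norm X0 (\<lambda>x. U x - \<kappa> (P x)) Wx \<and> b = state_norm X0 U Ux)" for a b
  have "\<exists>\<rho>. class_K_inf \<rho> \<and> (\<forall>a b. Rel a b \<longrightarrow> b \<le> \<rho> a)"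
  proof (rule class_K_inf_bound_of_relation)
    fix a b assume "Rel a b"
    then obtain U Ux Wx P X0 where sl: "slice U Ux Wx P X0" and "a = state_norm X0 (\<lambda>x. U x - \<kappa> (P x)) Wx"
      unfolding Rel_def by blast
    then show "0 \<le> a"
      using state_norm_ge(4)[OF closed_loop_slice.W_cont[OF sl] closed_loop_slice.Wx_cont[OF sl]] by simp
  next
    fix r
    obtain C where "\<forall>U Ux Wx P X0. slice U Ux Wx P X0 \<longrightarrow> state_norm X0 (\<lambda>x. U x - \<kappa> (P x)) Wx \<le> r \<longrightarrow> state_norm X0 U Ux \<le> C"
      using u_norm_bounded by blast
    then show "\<exists>C. \<forall>a b. Rel a b \<longrightarrow> a \<le> r \<longrightarrow> b \<le> C" unfolding Rel_def by blast
  next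
    fix e :: real assume "e > 0"
    then obtain d where "d > 0" "\<forall>U Ux Wx P X0. slice U Ux Wx P X0 \<longrightarrow> state_norm X0 (\<lambda>x. U x - \<kappa> (P x)) Wx \<le> d \<longrightarrow> state_norm X0 U Ux \<le> e"
      using u_norm_small by blast
    then show "\<exists>d>0. \<forall>a b. Rel a b \<longrightarrow> a \<le> d \<longrightarrow> b \<le> e" unfolding Rel_def by blast
  qed
  then show ?thesis unfolding Rel_def by blast
qed

lemma slice_of_solution:
  assumes sol: "closed_loop_solution f v \<kappa> X u ux ut p"
    and slope: "\<forall>x\<in>{0..1}. \<forall>t\<ge>0. -M < deriv v (u x t) * ux x t / v (u x t)
                            \<and> deriv v (u x t) * ux x t / v (u x t) < 1"
    and dw: "\<forall>x\<in>{0..1}. \<forall>t\<ge>0.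
          ((\<lambda>y. u y t - \<kappa> (p y t)) has_real_derivative wx x t) (at x within {0..1})"
    and t: "t \<ge> 0"
  shows "slice (\<lambda>x. u x t) (\<lambda>x. ux x t) (\<lambda>x. wx x t) (\<lambda>x. p x t) (X t)"
proof (rule closed_loop_slice.intro[OF closed_loop_data_axioms], rule closed_loop_slice_axioms.intro)
  have cp: "continuous_on {0..1} (\<lambda>x::real. (x, t))" by (intro continuous_intros)
  have im: "(\<lambda>x::real. (x, t)) ` {0..1} \<subseteq> Dom" using t by (auto simp: Dom_def)
  have "continuous_on Dom (\<lambda>(x, t). u x t)" "continuous_on Dom (\<lambda>(x, t). ux x t)"
    using sol unfolding closed_loop_solution_def by blast+
  from this[THEN continuous_on_compose2, OF cp im]
  show "continuous_on {0..1} (\<lambda>x. u x t)" "continuous_on {0..1} (\<lambda>x. ux x t)" by simp_all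
  show "((\<lambda>x. u x t) has_real_derivative ux x t) (at x within {0..1})"
    "p x t = X t + integral {0..x} (\<lambda>y. Gamma v (u y t) (ux y t) y *\<^sub>R f (p y t) (u y t))"
    if "x \<in> {0..1}" for x
    using sol that t unfolding closed_loop_solution_def by blast+
  show "- M < deriv v (u x t) * ux x t / v (u x t) \<and> deriv v (u x t) * ux x t / v (u x t) < 1"
    "((\<lambda>y. u y t - \<kappa> (p y t)) has_real_derivative wx x t) (at x within {0..1})"
    if "x \<in> {0..1}" for x
    using slope dw that t by blast+
qed

lemma state_norms_equivalent:
  "\<exists>\<rho>3 \<rho>4. class_K_inf \<rho>3 \<and> class_K_inf \<rho>4 \<and>
    (\<forall>X u ux ut p wx.
       closed_loop_solution f v \<kappa> X u ux ut p \<longrightarrow>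
       (\<forall>x\<in>{0..1}. \<forall>t\<ge>0. -M < deriv v (u x t) * ux x t / v (u x t)
                            \<and> deriv v (u x t) * ux x t / v (u x t) < 1) \<longrightarrow>
       (\<forall>x\<in>{0..1}. \<forall>t\<ge>0.
          ((\<lambda>y. u y t - \<kappa> (p y t)) has_real_derivative wx x t) (at x within {0..1})) \<longrightarrow>
       (\<forall>t\<ge>0.
          state_norm (X t) (\<lambda>x. u x t - \<kappa> (p x t)) (\<lambda>x. wx x t)
            \<le> \<rho>3 (state_norm (X t) (\<lambda>x. u x t) (\<lambda>x. ux x t)) \<and>
          state_norm (X t) (\<lambda>x. u x t) (\<lambda>x. ux x t)
            \<le> \<rho>4 (state_norm (X t) (\<lambda>x. u x t - \<kappa> (p x t)) (\<lambda>x. wx x t))))"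
proof -
  obtain \<rho>3 where K3: "class_K_inf \<rho>3" and \<rho>3: "\<And>U Ux Wx P X0. slice U Ux Wx P X0 \<Longrightarrow>
      state_norm X0 (\<lambda>x. U x - \<kappa> (P x)) Wx \<le> \<rho>3 (state_norm X0 U Ux)"
    using w_norm_class_K_inf_bound by blast
  obtain \<rho>4 where K4: "class_K_inf \<rho>4" and \<rho>4: "\<And>U Ux Wx P X0. slice U Ux Wx P X0 \<Longrightarrow>
      state_norm X0 U Ux \<le> \<rho>4 (state_norm X0 (\<lambda>x. U x - \<kappa> (P x)) Wx)"
    using u_norm_class_K_inf_bound by blast
  have "state_norm (X t) (\<lambda>x. u x t - \<kappa> (p x t)) (\<lambda>x. wx x t)
        \<le> \<rho>3 (state_norm (X t) (\<lambda>x. u x t) (\<lambda>x. ux x t)) \<and>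
      state_norm (X t) (\<lambda>x. u x t) (\<lambda>x. ux x t)
        \<le> \<rho>4 (state_norm (X t) (\<lambda>x. u x t - \<kappa> (p x t)) (\<lambda>x. wx x t))"
    if "closed_loop_solution f v \<kappa> X u ux ut p"
      "\<forall>x\<in>{0..1}. \<forall>t\<ge>0. -M < deriv v (u x t) * ux x t / v (u x t) \<and> deriv v (u x t) * ux x t / v (u x t) < 1"
      "\<forall>x\<in>{0..1}. \<forall>t\<ge>0. ((\<lambda>y. u y t - \<kappa> (p y t)) has_real_derivative wx x t) (at x within {0..1})"
      "0 \<le> t"
    for X u ux ut p wx and t :: real
    using \<rho>3[OF slice_of_solution[OF that]] \<rho>4[OF slice_of_solution[OF that]] by simp
  then show ?thesis using K3 K4 by blast
qed

end

lemma closed_loop_data_of_assumptions: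
  fixes f :: "'a::euclidean_space \<Rightarrow> real \<Rightarrow> 'a" and v :: "real \<Rightarrow> real" and \<kappa> :: "'a \<Rightarrow> real"
  assumes f_C1: "C1_on UNIV (\<lambda>(X, w). f X w)"
    and f00: "f 0 0 = 0"
    and A1_smooth: "C2_on UNIV v"
    and A1_pos: "\<exists>vlow>0. \<forall>s. v s \<ge> vlow"
    and A2: "strongly_forward_complete f"
    and A3_smooth: "C2_on UNIV \<kappa>"
    and A3_zero: "\<kappa> 0 = 0"
    and A3_ISS: "ISS (\<lambda>X \<omega>. f X (\<kappa> X + \<omega>))"
    and M_pos: "M > 0"
  shows "\<exists>vlow R R' \<alpha>1 \<alpha>2 \<alpha>3 \<kappa>d \<beta> \<gamma>. closed_loop_data f v \<kappa> M vlow R R' \<alpha>1 \<alpha>2 \<alpha>3 \<kappa>d \<beta> \<gamma>"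
proof -
  obtain F' where dF: "\<And>z. ((\<lambda>(X, w). f X w) has_derivative blinfun_apply (F' z)) (at z)"
    and F'c: "continuous_on UNIV F'"
    using f_C1 unfolding C1_on_def by blast
  obtain \<kappa>d where d\<kappa>: "\<And>z. (\<kappa> has_derivative blinfun_apply (\<kappa>d z)) (at z)"
    and \<kappa>d_cont: "continuous_on UNIV \<kappa>d"
    using C2_on_UNIV_derivative[OF A3_smooth] by blast
  obtain vlow where "vlow > 0" "\<And>s. vlow \<le> v s" using A1_pos by blast
  moreover obtain R R' \<alpha>1 \<alpha>2 \<alpha>3 where "class_K_inf \<alpha>1" "class_K_inf \<alpha>2" "class_K_inf \<alpha>3"
    and "\<forall>X. (R has_derivative R' X) (at X)"
    and "\<forall>X. 0 \<le> R X \<and> \<alpha>1 (norm X) \<le> R X \<and> R X \<le> \<alpha>2 (norm X)"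
    and "\<forall>X \<omega>. R' X (f X \<omega>) \<le> R X + \<alpha>3 \<bar>\<omega>\<bar>"
    using A2 unfolding strongly_forward_complete_def by blast
  moreover obtain \<beta> \<gamma> where "class_KL \<beta>" "class_K \<gamma>"
    and "\<forall>X \<omega>. continuous_on {0..} \<omega> \<longrightarrow>
        (\<forall>t\<ge>0. (X has_vector_derivative f (X t) (\<kappa> (X t) + \<omega> t)) (at t within {0..})) \<longrightarrow>
        (\<forall>t\<ge>0. norm (X t) \<le> \<beta> (norm (X 0)) t + \<gamma> (sup_on {0..t} \<omega>))"
    using A3_ISS unfolding ISS_def by blast
  ultimately have "closed_loop_data f v \<kappa> M vlow R R' \<alpha>1 \<alpha>2 \<alpha>3 \<kappa>d \<beta> \<gamma>"
    using locally_lipschitz_of_C1[OF dF F'c] C1_on_UNIV_continuous[OF f_C1] f00 M_pos d\<kappa> \<kappa>d_cont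
      A3_zero C2_on_UNIV_real_continuous[OF A1_smooth]
    by unfold_locales auto
  then show ?thesis by blast
qed

theorem lemma5:
  fixes f :: "'a::euclidean_space \<Rightarrow> real \<Rightarrow> 'a"
    and v :: "real \<Rightarrow> real"
    and \<kappa> :: "'a \<Rightarrow> real"
    and M :: real
  assumes f_C1: "C1_on UNIV (\<lambda>(X, w). f X w)"
    and f00: "f 0 0 = 0"
    and A1_smooth: "C2_on UNIV v"
    and A1_pos: "\<exists>vlow>0. \<forall>s. v s \<ge> vlow"
    and A2: "strongly_forward_complete f"
    and A3_smooth: "C2_on UNIV \<kappa>"
    and A3_zero: "\<kappa> 0 = 0"
    and A3_ISS: "ISS (\<lambda>X \<omega>. f X (\<kappa> X + \<omega>))"
    and M_pos: "M > 0"
  shows "\<exists>\<rho>3 \<rho>4. class_K_inf \<rho>3 \<and> class_K_inf \<rho>4 \<and>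
    (\<forall>X u ux ut p wx.
       closed_loop_solution f v \<kappa> X u ux ut p \<longrightarrow>
       (\<forall>x\<in>{0..1}. \<forall>t\<ge>0. -M < deriv v (u x t) * ux x t / v (u x t)
                            \<and> deriv v (u x t) * ux x t / v (u x t) < 1) \<longrightarrow>
       (\<forall>x\<in>{0..1}. \<forall>t\<ge>0.
          ((\<lambda>y. u y t - \<kappa> (p y t)) has_real_derivative wx x t) (at x within {0..1})) \<longrightarrow>
       (\<forall>t\<ge>0.
          norm (X t) + supnorm01 (\<lambda>x. u x t - \<kappa> (p x t)) + supnorm01 (\<lambda>x. wx x t)
            \<le> \<rho>3 (norm (X t) + supnorm01 (\<lambda>x. u x t) + supnorm01 (\<lambda>x. ux x t)) \<and>
          norm (X t) + supnorm01 (\<lambda>x. u x t) + supnorm01 (\<lambda>x. ux x t)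
            \<le> \<rho>4 (norm (X t) + supnorm01 (\<lambda>x. u x t - \<kappa> (p x t)) + supnorm01 (\<lambda>x. wx x t))))"
proof -
  obtain vlow R R' \<alpha>1 \<alpha>2 \<alpha>3 \<kappa>d \<beta> \<gamma> where "closed_loop_data f v \<kappa> M vlow R R' \<alpha>1 \<alpha>2 \<alpha>3 \<kappa>d \<beta> \<gamma>"
    using closed_loop_data_of_assumptions[OF assms] by blast
  then interpret closed_loop_data f v \<kappa> M vlow R R' \<alpha>1 \<alpha>2 \<alpha>3 \<kappa>d \<beta> \<gamma> .
  show ?thesis using state_norms_equivalent unfolding state_norm_def .
qed

end
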